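(* Let $u\in\mathbb C^\times$ and let $W(u)$ be the vector superspace with basis $[u]^j$, $j\in\mathbb Z$, where $[u]^j$ has parity $(1-s_j)/2$. Then the following formulas define on $W(u)$ the structure of an irreducible tame $\mathcal E_{\mathbf s}$-module of level zero: for $i\in\hat I$, $j\in\mathbb Z$, $$E_i(z)[u]^j=\begin{cases}\delta(q_3^{\bar j}u/z)[u]^{j+1},& i\equiv j\pmod N,\\0,&\text{otherwise},\end{cases}\qquad F_i(z)[u]^{j+1}=\begin{cases}s_{j+1}\,\delta(q_3^{\bar j}u/z)[u]^{j},& i\equiv j\pmod N,\\0,&\text{otherwise},\end{cases}$$ $$K_i^\pm(z)[u]^j=\begin{cases}\psi_{-s_j}(q_3^{\bar j}u/z)[u]^j,& i\equiv j\pmod N,\\ \psi_{s_j}(q_3^{\overline{j-1}}u/z)[u]^j,& i\equiv j-1\pmod N,\\ [u]^j,&\text{otherwise}.\end{cases}$$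
   Context: Fix integers $m,n\ge0$, $m\ne n$, $N=m+n\ge3$, a parity sequence $\mathbf s=(s_1,\dots,s_N)\in\{1,-1\}^N$ with exactly $m$ entries $1$, extended by $s_{i+N}=s_i$; $\hat I=\{0,\dots,N-1\}$ (indices mod $N$), $|i|=(1-s_is_{i+1})/2$, $A_{i,j}=(s_i+s_{i+1})\delta_{i,j}-s_i\delta_{i,j+1}-s_j\delta_{i+1,j}$, $M_{i+1,i}=-M_{i,i+1}=s_{i+1}$ and $M_{i,j}=0$ if $i\ne j\pm1$. Let $\hat Q$ be free abelian on $\alpha_i$ with $\langle\alpha_i,\alpha_j\rangle=A_{i,j}$. Fix $d,q\in\mathbb C^\times$, $q_1=dq^{-1}$, $q_2=q^2$, $q_3=d^{-1}q^{-1}$, with $q_1^aq_2^bq_3^c=1$ only if $a=b=c$. $\delta(z)=\sum_{n\in\mathbb Z}z^n$. $\mathcal E_{\mathbf s}$ is the unital associative superalgebra generated by $E_{i,r},F_{i,r},H_{i,r'}$, invertible $K_i$ ($i\in\hat I$, $r,r'\in\mathbb Z$, $r'\ne0$), $|E_{i,r}|=|F_{i,r}|=|i|$, others even; $E_i(z)=\sum_kE_{i,k}z^{-k}$, $F_i(z)=\sum_kF_{i,k}z^{-k}$, $K_i^\pm(z)=K_i^{\pm1}\exp(\pm(q-q^{-1})\sum_{r>0}H_{i,\pm r}z^{\mp r})$; $[X,Y]=XY-(-1)^{|X||Y|}YX$ and $[\![X,Y]\!]=XY-(-1)^{|X||Y|}q^{\langle\alpha,\beta\rangle}YX$ for $X,Y$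 of weights $\alpha,\beta$ ($E_{i,r}$ weight $\alpha_i$, $F_{i,r}$ weight $-\alpha_i$, $K_i,H_{i,r}$ weight 0). Relations, for all $i,j\in\hat I$: (1) $K_iK_j=K_jK_i$, $K_iE_j(z)K_i^{-1}=q^{A_{i,j}}E_j(z)$, $K_iF_j(z)K_i^{-1}=q^{-A_{i,j}}F_j(z)$; (2) $K_i^\pm(z)K_j^\pm(w)=K_j^\pm(w)K_i^\pm(z)$, $K_i^-(z)K_j^+(w)=K_j^+(w)K_i^-(z)$; (3) $(d^{M_{i,j}}z-q^{A_{i,j}}w)K_i^\pm(z)E_j(w)=(d^{M_{i,j}}q^{A_{i,j}}z-w)E_j(w)K_i^\pm(z)$, $(d^{M_{i,j}}z-q^{-A_{i,j}}w)K_i^\pm(z)F_j(w)=(d^{M_{i,j}}q^{-A_{i,j}}z-w)F_j(w)K_i^\pm(z)$; (4) $[E_i(z),F_j(w)]=\frac{\delta_{i,j}}{q-q^{-1}}(\delta(w/z)K_i^+(w)-\delta(z/w)K_i^-(z))$; (5) if $A_{i,j}=0$: $[E_i(z),E_j(w)]=0=[F_i(z),F_j(w)]$; if $A_{i,j}\neq0$: $(d^{M_{i,j}}z-q^{A_{i,j}}w)E_i(z)E_j(w)=(-1)^{|i||j|}(d^{M_{i,j}}q^{A_{i,j}}z-w)E_j(w)E_i(z)$ and $(d^{M_{i,j}}z-q^{-A_{i,j}}w)F_i(z)F_j(w)=(-1)^{|i||j|}(d^{M_{i,j}}q^{-A_{i,j}}z-w)F_j(w)F_i(z)$; (6) if $A_{i,i}\ne0$: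 $\mathrm{Sym}_{z_1,z_2}[\![E_i(z_1),[\![E_i(z_2),E_{i\pm1}(w)]\!]]\!]=0$, same for $F$; if $mn\ne2$, $A_{i,i}=0$: $\mathrm{Sym}_{z_1,z_2}[\![E_i(z_1),[\![E_{i+1}(w_1),[\![E_i(z_2),E_{i-1}(w_2)]\!]]\!]]\!]=0$, same for $F$; if $mn=2$, $A_{i,i}\ne0$: $\mathrm{Sym}_{z_1,z_2}\mathrm{Sym}_{w_1,w_2}[\![E_{i-1}(z_1),[\![E_{i+1}(w_1),[\![E_{i-1}(z_2),[\![E_{i+1}(w_2),E_i(y)]\!]]\!]]\!]]\!]=\mathrm{Sym}_{z_1,z_2}\mathrm{Sym}_{w_1,w_2}[\![E_{i+1}(w_1),[\![E_{i-1}(z_1),[\![E_{i+1}(w_2),[\![E_{i-1}(z_2),E_i(y)]\!]]\!]]\!]]\!]$, same for $F$. Notation: $\bar j$ for $j\in\mathbb Z$ is defined by $\bar0=0$, $\overline{j+1}=\bar j+s_{j+1}$. $\psi_k(z)=\frac{q^k-q^{-k}z}{1-z}$; eigenvalues of $K_i^+(z)$ (resp. $K_i^-(z)$) are expansions in $z^{-1}$ (resp. $z$). Tame: there is a basis of common eigenvectors of all $K_i^\pm(z)$ and all joint eigenspaces are one-dimensional. Level zero: $K=K_0\cdots K_{N-1}$ acts by $1$. *)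

theory Defs
  imports Complex_Main "HOL-Library.Function_Algebras"
    "HOL-Computational_Algebra.Formal_Power_Series"
begin

(* A vector of W(u) is recorded by its coordinates w.r.t. the basis [u]^j, j in Z. *)
type_synonym wvec = "int \<Rightarrow> complex"
type_synonym opr = "wvec \<Rightarrow> wvec"

definition Wspace :: "wvec set" where
  "Wspace = {v. finite {j. v j \<noteq> 0}}"

definition basisv :: "int \<Rightarrow> wvec" where
  "basisv j = (\<lambda>k. if k = j then 1 else 0)"

definition vsc :: "complex \<Rightarrow> wvec \<Rightarrow> wvec" where
  "vsc c v = (\<lambda>j. c * v j)"

definition osc :: "complex \<Rightarrow> opr \<Rightarrow> opr" where
  "osc c T = (\<lambda>v. vsc c (T v))"

definition parity_seq :: "nat \<Rightarrow> nat \<Rightarrow> (int \<Rightarrow> int) \<Rightarrow> bool" where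
  "parity_seq m n s \<longleftrightarrow> m \<noteq> n \<and> 3 \<le> m + n \<and> (\<forall>i. s i = 1 \<or> s i = -1)
     \<and> (\<forall>i. s (i + int (m + n)) = s i)
     \<and> card {i \<in> {0..<int (m + n)}. s i = 1} = m"

definition deg :: "(int \<Rightarrow> int) \<Rightarrow> int \<Rightarrow> int" where
  "deg s i = (1 - s i * s (i + 1)) div 2"

definition vpar :: "(int \<Rightarrow> int) \<Rightarrow> int \<Rightarrow> int" where
  "vpar s j = (1 - s j) div 2"

definition Acart :: "(int \<Rightarrow> int) \<Rightarrow> int \<Rightarrow> int \<Rightarrow> int \<Rightarrow> int" where
  "Acart s N i j =
     (if i mod N = j mod N then s i + s (i + 1) else 0)
     - (if i mod N = (j + 1) mod N then s i else 0)
     - (if (i + 1) mod N = j mod N then s j else 0)"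

definition Mmat :: "(int \<Rightarrow> int) \<Rightarrow> int \<Rightarrow> int \<Rightarrow> int \<Rightarrow> int" where
  "Mmat s N i j =
     (if (i - 1) mod N = j mod N then s i
      else if (i + 1) mod N = j mod N then - s j else 0)"

(* \bar j : \bar 0 = 0, \bar{j+1} = \bar j + s_{j+1} *)
definition sbar :: "(int \<Rightarrow> int) \<Rightarrow> int \<Rightarrow> int" where
  "sbar s j = (if 0 \<le> j then (\<Sum>k\<in>{1..j}. s k) else - (\<Sum>k\<in>{j+1..0}. s k))"

(* q_3^{\bar j} u, with q_3 = d^{-1} q^{-1} *)
definition aval :: "(int \<Rightarrow> int) \<Rightarrow> complex \<Rightarrow> complex \<Rightarrow> complex \<Rightarrow> int \<Rightarrow> complex" where
  "aval s d q u j = (inverse (d * q)) powi (sbar s j) * u"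

(* E_i(z)[u]^j = delta(a_j/z)[u]^{j+1} if i = j mod N; delta(a/z) = sum_r a^r z^{-r}.
   Eop .. i r is the coefficient E_{i,r} of z^{-r}, extended linearly. *)
definition Eop :: "(int \<Rightarrow> int) \<Rightarrow> int \<Rightarrow> complex \<Rightarrow> complex \<Rightarrow> complex \<Rightarrow> int \<Rightarrow> int \<Rightarrow> opr" where
  "Eop s N d q u i r v =
     (\<lambda>k. if (k - 1) mod N = i mod N then (aval s d q u (k - 1)) powi r * v (k - 1) else 0)"

definition Fop :: "(int \<Rightarrow> int) \<Rightarrow> int \<Rightarrow> complex \<Rightarrow> complex \<Rightarrow> complex \<Rightarrow> int \<Rightarrow> int \<Rightarrow> opr" where
  "Fop s N d q u i r v =
     (\<lambda>k. if k mod N = i mod N then of_int (s (k + 1)) * (aval s d q u k) powi r * v (k + 1) else 0)"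

definition psi_fps :: "complex \<Rightarrow> int \<Rightarrow> complex fps" where
  "psi_fps q k = (fps_const (q powi k) - fps_const (q powi (- k)) * fps_X) * inverse (1 - fps_X)"

(* coefficient of z^{-r} in the expansion of psi_k(a/z) in powers of z^{-1} *)
definition psi_inf :: "complex \<Rightarrow> int \<Rightarrow> complex \<Rightarrow> nat \<Rightarrow> complex" where
  "psi_inf q k a r = fps_nth (psi_fps q k) r * a ^ r"

(* coefficient of z^{r} in the expansion of psi_k(a/z) in powers of z:
   with y = z/a, psi_k(a/z) = (q^{-k} - q^k y)/(1 - y) *)
definition psi_zero :: "complex \<Rightarrow> int \<Rightarrow> complex \<Rightarrow> nat \<Rightarrow> complex" where
  "psi_zero q k a r =
     fps_nth ((fps_const (q powi (- k)) - fps_const (q powi k) * fps_X) * inverse (1 - fps_X)) r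
       * (inverse a) ^ r"

(* eigenvalue of the coefficient of z^{-r} of K_i^+(z) on [u]^j *)
definition kp_eig :: "(int \<Rightarrow> int) \<Rightarrow> int \<Rightarrow> complex \<Rightarrow> complex \<Rightarrow> complex \<Rightarrow> int \<Rightarrow> nat \<Rightarrow> int \<Rightarrow> complex" where
  "kp_eig s N d q u i r j =
     (if j mod N = i mod N then psi_inf q (- s j) (aval s d q u j) r
      else if (j - 1) mod N = i mod N then psi_inf q (s j) (aval s d q u (j - 1)) r
      else (if r = 0 then 1 else 0))"

(* eigenvalue of the coefficient of z^{r} of K_i^-(z) on [u]^j *)
definition km_eig :: "(int \<Rightarrow> int) \<Rightarrow> int \<Rightarrow> complex \<Rightarrow> complex \<Rightarrow> complex \<Rightarrow> int \<Rightarrow> nat \<Rightarrow> int \<Rightarrow> complex" where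
  "km_eig s N d q u i r j =
     (if j mod N = i mod N then psi_zero q (- s j) (aval s d q u j) r
      else if (j - 1) mod N = i mod N then psi_zero q (s j) (aval s d q u (j - 1)) r
      else (if r = 0 then 1 else 0))"

definition KpW :: "(int \<Rightarrow> int) \<Rightarrow> int \<Rightarrow> complex \<Rightarrow> complex \<Rightarrow> complex \<Rightarrow> int \<Rightarrow> nat \<Rightarrow> opr" where
  "KpW s N d q u i r v = (\<lambda>j. kp_eig s N d q u i r j * v j)"

definition KmW :: "(int \<Rightarrow> int) \<Rightarrow> int \<Rightarrow> complex \<Rightarrow> complex \<Rightarrow> complex \<Rightarrow> int \<Rightarrow> nat \<Rightarrow> opr" where
  "KmW s N d q u i r v = (\<lambda>j. km_eig s N d q u i r j * v j)"

definition compositions :: "nat \<Rightarrow> nat \<Rightarrow> nat list set" where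
  "compositions n k = {rs. length rs = k \<and> (\<forall>r\<in>set rs. 0 < r) \<and> sum_list rs = n}"

definition op_comp_list :: "(nat \<Rightarrow> opr) \<Rightarrow> nat list \<Rightarrow> opr" where
  "op_comp_list c rs = foldr (\<lambda>r T. c r \<circ> T) rs id"

(* coefficient of z^n in exp(sum_{r>0} c_r z^r) = sum_k (1/k!) (sum_r c_r z^r)^k *)
definition op_exp_coef :: "(nat \<Rightarrow> opr) \<Rightarrow> nat \<Rightarrow> opr" where
  "op_exp_coef c n = (\<Sum>k\<in>{0..n}. osc (1 / fact k) (\<Sum>rs\<in>compositions n k. op_comp_list c rs))"

(* K_i^+(z) = K_i exp((q-q^{-1}) sum_{r>0} H_{i,r} z^{-r}) : coefficient of z^{-n} *)
definition Kplus :: "complex \<Rightarrow> (int \<Rightarrow> opr) \<Rightarrow> (int \<Rightarrow> int \<Rightarrow> opr) \<Rightarrow> int \<Rightarrow> nat \<Rightarrow> opr" where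
  "Kplus q K H i n = K i \<circ> op_exp_coef (\<lambda>r. osc (q - inverse q) (H i (int r))) n"

(* K_i^-(z) = K_i^{-1} exp(-(q-q^{-1}) sum_{r>0} H_{i,-r} z^{r}) : coefficient of z^{n} *)
definition Kminus :: "complex \<Rightarrow> (int \<Rightarrow> opr) \<Rightarrow> (int \<Rightarrow> int \<Rightarrow> opr) \<Rightarrow> int \<Rightarrow> nat \<Rightarrow> opr" where
  "Kminus q Kinv H i n = Kinv i \<circ> op_exp_coef (\<lambda>r. osc (- (q - inverse q)) (H i (- int r))) n"

(* coefficient of z^{-t} (t in Z) of K_i^+(z) resp. K_i^-(z) *)
definition KZp :: "complex \<Rightarrow> (int \<Rightarrow> opr) \<Rightarrow> (int \<Rightarrow> int \<Rightarrow> opr) \<Rightarrow> int \<Rightarrow> int \<Rightarrow> opr" where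
  "KZp q K H i t = (if t < 0 then (\<lambda>v. 0) else Kplus q K H i (nat t))"

definition KZm :: "complex \<Rightarrow> (int \<Rightarrow> opr) \<Rightarrow> (int \<Rightarrow> int \<Rightarrow> opr) \<Rightarrow> int \<Rightarrow> int \<Rightarrow> opr" where
  "KZm q Kinv H i t = (if 0 < t then (\<lambda>v. 0) else Kminus q Kinv H i (nat (- t)))"

type_synonym gen = "opr \<times> (int \<Rightarrow> int) \<times> int"   (* operator, weight in \hat Q, parity *)

definition unitw :: "int \<Rightarrow> int \<Rightarrow> int \<Rightarrow> int" where
  "unitw N i = (\<lambda>k. if k mod N = i mod N then 1 else 0)"

definition wpair :: "(int \<Rightarrow> int) \<Rightarrow> int \<Rightarrow> (int \<Rightarrow> int) \<Rightarrow> (int \<Rightarrow> int) \<Rightarrow> int" where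
  "wpair s N \<alpha> \<beta> = (\<Sum>k\<in>{0..<N}. \<Sum>l\<in>{0..<N}. \<alpha> k * \<beta> l * Acart s N k l)"

definition qbr :: "(int \<Rightarrow> int) \<Rightarrow> int \<Rightarrow> complex \<Rightarrow> gen \<Rightarrow> gen \<Rightarrow> gen" where
  "qbr s N q X Y =
     (case X of (x, \<alpha>, p) \<Rightarrow> case Y of (y, \<beta>, p') \<Rightarrow>
       ((\<lambda>v. x (y v) - vsc ((-1) powi (p * p') * q powi (wpair s N \<alpha> \<beta>)) (y (x v))),
        \<alpha> + \<beta>, p + p'))"

definition lin_on :: "wvec set \<Rightarrow> opr \<Rightarrow> bool" where
  "lin_on W T \<longleftrightarrow> (\<forall>v\<in>W. T v \<in> W) \<and> (\<forall>v\<in>W. \<forall>w\<in>W. T (v + w) = T v + T w)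
     \<and> (\<forall>c. \<forall>v\<in>W. T (vsc c v) = vsc c (T v))"

definition Wpar :: "(int \<Rightarrow> int) \<Rightarrow> int \<Rightarrow> wvec set" where
  "Wpar s p = {v \<in> Wspace. \<forall>j. v j \<noteq> 0 \<longrightarrow> vpar s j = p}"

definition has_parity :: "(int \<Rightarrow> int) \<Rightarrow> int \<Rightarrow> opr \<Rightarrow> bool" where
  "has_parity s e T \<longleftrightarrow> (\<forall>p\<in>{0,1}. \<forall>v\<in>Wpar s p. T v \<in> Wpar s ((p + e) mod 2))"

(* the defining relations (1)-(6) of E_s, stated for the action on W(u) *)
definition Es_module ::
  "nat \<Rightarrow> nat \<Rightarrow> (int \<Rightarrow> int) \<Rightarrow> complex \<Rightarrow> complex \<Rightarrow>
   (int \<Rightarrow> int \<Rightarrow> opr) \<Rightarrow> (int \<Rightarrow> int \<Rightarrow> opr) \<Rightarrow> (int \<Rightarrow> opr) \<Rightarrow> (int \<Rightarrow> opr) \<Rightarrow>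
   (int \<Rightarrow> int \<Rightarrow> opr) \<Rightarrow> bool" where
  "Es_module m n s d q E F K Kinv H \<longleftrightarrow>
   (let N = int (m + n); W = Wspace; I = {0..<N};
        A = Acart s N; M = Mmat s N;
        Kp = Kplus q K H; Km = Kminus q Kinv H;
        gE = (\<lambda>i r. (E i r, unitw N i, deg s i));
        gF = (\<lambda>i r. (F i r, - unitw N i, deg s i));
        br = qbr s N q
    in
    \<comment> \<open>operators are linear maps of W(u) of the right parity\<close>
    (\<forall>i\<in>I. \<forall>r. lin_on W (E i r) \<and> lin_on W (F i r)
              \<and> has_parity s (deg s i) (E i r) \<and> has_parity s (deg s i) (F i r)) \<and>
    (\<forall>i\<in>I. lin_on W (K i) \<and> lin_on W (Kinv i) \<and> has_parity s 0 (K i) \<and> has_parity s 0 (Kinv i)) \<and>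
    (\<forall>i\<in>I. \<forall>r. r \<noteq> 0 \<longrightarrow> lin_on W (H i r) \<and> has_parity s 0 (H i r)) \<and>
    \<comment> \<open>K_i invertible\<close>
    (\<forall>i\<in>I. \<forall>v\<in>W. K i (Kinv i v) = v \<and> Kinv i (K i v) = v) \<and>
    (\<forall>i\<in>I. \<forall>j\<in>I. \<forall>v\<in>W.
       \<comment> \<open>(1)\<close>
       K i (K j v) = K j (K i v) \<and>
       (\<forall>r. K i (E j r (Kinv i v)) = vsc (q powi A i j) (E j r v)) \<and>
       (\<forall>r. K i (F j r (Kinv i v)) = vsc (q powi (- A i j)) (F j r v)) \<and>
       \<comment> \<open>(2)\<close>
       (\<forall>a b. Kp i a (Kp j b v) = Kp j b (Kp i a v) \<and> Km i a (Km j b v) = Km j b (Km i a v)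
              \<and> Km i a (Kp j b v) = Kp j b (Km i a v)) \<and>
       \<comment> \<open>(3)\<close>
       (\<forall>KZ\<in>{KZp q K H, KZm q Kinv H}. \<forall>r k.
          vsc (d powi M i j) (KZ i (r + 1) (E j k v)) - vsc (q powi A i j) (KZ i r (E j (k + 1) v))
            = vsc (d powi M i j * q powi A i j) (E j k (KZ i (r + 1) v)) - E j (k + 1) (KZ i r v) \<and>
          vsc (d powi M i j) (KZ i (r + 1) (F j k v)) - vsc (q powi (- A i j)) (KZ i r (F j (k + 1) v))
            = vsc (d powi M i j * q powi (- A i j)) (F j k (KZ i (r + 1) v)) - F j (k + 1) (KZ i r v)) \<and>
       \<comment> \<open>(4)\<close>
       (\<forall>a b. E i a (F j b v) - vsc ((-1) powi (deg s i * deg s j)) (F j b (E i a v))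
          = (if i = j then vsc (1 / (q - inverse q)) (KZp q K H i (a + b) v - KZm q Kinv H i (a + b) v)
             else 0)) \<and>
       \<comment> \<open>(5)\<close>
       (A i j = 0 \<longrightarrow> (\<forall>a b.
          E i a (E j b v) - vsc ((-1) powi (deg s i * deg s j)) (E j b (E i a v)) = 0 \<and>
          F i a (F j b v) - vsc ((-1) powi (deg s i * deg s j)) (F j b (F i a v)) = 0)) \<and>
       (A i j \<noteq> 0 \<longrightarrow> (\<forall>a b.
          vsc (d powi M i j) (E i (a + 1) (E j b v)) - vsc (q powi A i j) (E i a (E j (b + 1) v))
            = vsc ((-1) powi (deg s i * deg s j))
                (vsc (d powi M i j * q powi A i j) (E j b (E i (a + 1) v)) - E j (b + 1) (E i a v)) \<and>
          vsc (d powi M i j) (F i (a + 1) (F j b v)) - vsc (q powi (- A i j)) (F i a (F j (b + 1) v))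
            = vsc ((-1) powi (deg s i * deg s j))
                (vsc (d powi M i j * q powi (- A i j)) (F j b (F i (a + 1) v)) - F j (b + 1) (F i a v))))) \<and>
    \<comment> \<open>(6) Serre relations, for g = E and g = F\<close>
    (\<forall>g\<in>{gE, gF}. \<forall>i\<in>I. \<forall>v\<in>W.
       (A i i \<noteq> 0 \<longrightarrow> (\<forall>e\<in>{1, -1}. \<forall>a1 a2 b.
          fst (br (g i a1) (br (g i a2) (g ((i + e) mod N) b))) v
          + fst (br (g i a2) (br (g i a1) (g ((i + e) mod N) b))) v = 0)) \<and>
       (m * n \<noteq> 2 \<and> A i i = 0 \<longrightarrow> (\<forall>a1 a2 b1 b2.
          fst (br (g i a1) (br (g ((i + 1) mod N) b1) (br (g i a2) (g ((i - 1) mod N) b2)))) v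
          + fst (br (g i a2) (br (g ((i + 1) mod N) b1) (br (g i a1) (g ((i - 1) mod N) b2)))) v = 0)) \<and>
       (m * n = 2 \<and> A i i \<noteq> 0 \<longrightarrow> (\<forall>a1 a2 b1 b2 c.
          (let L = (\<lambda>a1 a2 b1 b2. fst (br (g ((i - 1) mod N) a1) (br (g ((i + 1) mod N) b1)
                      (br (g ((i - 1) mod N) a2) (br (g ((i + 1) mod N) b2) (g i c))))) v);
               R = (\<lambda>a1 a2 b1 b2. fst (br (g ((i + 1) mod N) b1) (br (g ((i - 1) mod N) a1)
                      (br (g ((i + 1) mod N) b2) (br (g ((i - 1) mod N) a2) (g i c))))) v)
           in L a1 a2 b1 b2 + L a2 a1 b1 b2 + L a1 a2 b2 b1 + L a2 a1 b2 b1
              = R a1 a2 b1 b2 + R a2 a1 b1 b2 + R a1 a2 b2 b1 + R a2 a1 b2 b1)))))"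

definition irreducible_module ::
  "int \<Rightarrow> (int \<Rightarrow> int \<Rightarrow> opr) \<Rightarrow> (int \<Rightarrow> int \<Rightarrow> opr) \<Rightarrow> (int \<Rightarrow> opr) \<Rightarrow> (int \<Rightarrow> opr) \<Rightarrow>
   (int \<Rightarrow> int \<Rightarrow> opr) \<Rightarrow> bool" where
  "irreducible_module N E F K Kinv H \<longleftrightarrow>
     Wspace \<noteq> {0} \<and>
     (\<forall>U. U \<subseteq> Wspace \<and> 0 \<in> U \<and> (\<forall>v\<in>U. \<forall>w\<in>U. v + w \<in> U) \<and> (\<forall>c. \<forall>v\<in>U. vsc c v \<in> U)
        \<and> (\<forall>i\<in>{0..<N}. \<forall>v\<in>U. K i v \<in> U \<and> Kinv i v \<in> U
              \<and> (\<forall>r. E i r v \<in> U \<and> F i r v \<in> U) \<and> (\<forall>r. r \<noteq> 0 \<longrightarrow> H i r v \<in> U))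
      \<longrightarrow> U = {0} \<or> U = Wspace)"

definition tame_module :: "int \<Rightarrow> (int \<Rightarrow> nat \<Rightarrow> opr) \<Rightarrow> (int \<Rightarrow> nat \<Rightarrow> opr) \<Rightarrow> bool" where
  "tame_module N Kp Km \<longleftrightarrow>
     (\<exists>B. B \<subseteq> Wspace \<and> \<not> module.dependent vsc B \<and> module.span vsc B = Wspace
        \<and> (\<forall>b\<in>B. b \<noteq> 0 \<and> (\<forall>i\<in>{0..<N}. \<forall>r. (\<exists>c. Kp i r b = vsc c b) \<and> (\<exists>c. Km i r b = vsc c b)))) \<and>
     (\<forall>lp lm. \<forall>v\<in>Wspace. \<forall>w\<in>Wspace.
        (\<forall>i\<in>{0..<N}. \<forall>r. Kp i r v = vsc (lp i r) v \<and> Km i r v = vsc (lm i r) v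
                       \<and> Kp i r w = vsc (lp i r) w \<and> Km i r w = vsc (lm i r) w) \<and> v \<noteq> 0
        \<longrightarrow> (\<exists>c. w = vsc c v))"

definition level_zero :: "int \<Rightarrow> (int \<Rightarrow> opr) \<Rightarrow> bool" where
  "level_zero N K \<longleftrightarrow> (\<forall>v\<in>Wspace. foldr (\<lambda>i T. K i \<circ> T) [0..N - 1] id v = v)"

end

theory Submission
  imports Defs
begin

(* W(u) is a string of one-dimensional weight spaces: E_i(z) moves [u]^j to [u]^(j+1) and F_i(z)
   moves it back, both only for i = j mod N and with the delta function at the spectral
   parameter zeta_j = q_3^(bar j) u, while K_i^+-(z) act diagonally. Taking H_(i,r) diagonal as
   well, with eigenvalues the coefficients of the logarithms of the eigenvalue series of
   K_i^+-(z), every defining relation reduces, coordinate by coordinate, to identities between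
   the zeta_j and the functions psi_(+-1), essentially zeta_(j+1) = q_3^(s_(j+1)) zeta_j and
   (z - q^(sigma+tau) a) psi_tau(a/z) = (q^(sigma+tau) z - a) psi_(-sigma)(a/z). Products
   E_i E_j vanish unless i = j + 1 mod N, which makes the Serre relations trivial except for
   N = 3, where both sides of the quintic relation are the same single term.
   Since zeta_(j+N) = q_3^(m-n) zeta_j with m <> n, genericity makes the spectral parameters
   distinct within each residue class; hence the joint eigenvalues of the K_i^+-(z) separate
   the basis vectors (tameness), and the diagonal operators F_i E_i split off coordinates, so
   every nonzero submodule contains a basis vector and then, by E and F, all of them
   (irreducibility). Level zero: on [u]^j only K_j and K_(j-1) act nontrivially, by the
   inverse factors q^(-s_j) and q^(s_j). *)

unbundle fps_syntax

lemma sbar_Suc: "sbar s (j + 1) = sbar s j + s (j + 1)"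
proof (cases "0 \<le> j")
  case True
  then have "{1..j + 1} = insert (j + 1) {1..j}" by auto
  with True show ?thesis by (simp add: sbar_def)
next
  case False
  show ?thesis
  proof (cases "j = -1")
    case False
    with \<open>\<not> 0 \<le> j\<close> have "{j + 1..0} = insert (j + 1) {j + 2..0}" by auto
    with \<open>\<not> 0 \<le> j\<close> False show ?thesis by (simp add: sbar_def add.commute)
  qed (simp add: sbar_def)
qed

lemma sum_fun_apply:
  fixes f :: "'a \<Rightarrow> 'b \<Rightarrow> 'c::comm_monoid_add"
  shows "(\<Sum>a\<in>S. f a) x = (\<Sum>a\<in>S. f a x)"
  by (induction S rule: infinite_finite_induct) auto

lemma exchange_relation_inverse:
  fixes D Qa Qi a Y0 Y1 Z0 Z1 :: complex
  assumes "Qa * Qi = 1" and "D * Y1 - Qa * a * Z1 = D * Qa * Y0 - a * Z0"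
  shows "D * Y0 - Qi * a * Z0 = D * Qi * Y1 - a * Z1"
proof -
  have "Qi * (D * Y1 - Qa * a * Z1) = Qi * (D * Qa * Y0 - a * Z0)" using assms(2) by simp
  then have "D * Qi * Y1 - (Qa * Qi) * a * Z1 = D * (Qa * Qi) * Y0 - Qi * a * Z0"
    by (simp add: algebra_simps)
  then show ?thesis using assms(1) by simp
qed

lemma fps_nth_psi_series:
  "((fps_const A - fps_const B * fps_X) * inverse (1 - fps_X)) $ r = (if r = 0 then A else A - (B::complex))"
proof -
  have "inverse (1 - fps_X :: complex fps) = inverse (inverse (Abs_fps (\<lambda>_. 1)))"
    by (simp add: fps_inverse_gp')
  also have "\<dots> = Abs_fps (\<lambda>_. 1)"
    by (rule fps_inverse_idempotent) simp
  finally have "(fps_const A - fps_const B * fps_X) * inverse (1 - fps_X)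
        = fps_const A * Abs_fps (\<lambda>_. 1) - fps_const B * (fps_X * Abs_fps (\<lambda>_. 1))"
    by (simp add: algebra_simps)
  then show ?thesis by (simp add: fps_X_mult_nth)
qed

lemma psi_inf_explicit:
  "psi_inf q k a r = (if r = 0 then q powi k else q powi k - q powi (- k)) * a ^ r"
  by (simp add: psi_inf_def psi_fps_def fps_nth_psi_series)

lemma psi_zero_explicit:
  "psi_zero q k a r = (if r = 0 then q powi (- k) else q powi (- k) - q powi k) * (inverse a) ^ r"
  by (simp add: psi_zero_def fps_nth_psi_series)

lemma compositions_0: "compositions n 0 = (if n = 0 then {[]} else {})"
  by (auto simp: compositions_def)

lemma compositions_Suc:
  "compositions n (Suc k) = (\<Union>i\<in>{1..n}. (#) i ` compositions (n - i) k)"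
proof (intro set_eqI iffI)
  fix rs assume "rs \<in> compositions n (Suc k)"
  then obtain r rs' where "rs = r # rs'" "length rs' = k" "0 < r" "\<forall>x\<in>set rs'. 0 < x"
     "r + sum_list rs' = n"
    by (cases rs) (auto simp: compositions_def)
  then show "rs \<in> (\<Union>i\<in>{1..n}. (#) i ` compositions (n - i) k)"
    by (auto simp: compositions_def intro!: bexI[of _ r])
qed (auto simp: compositions_def)

lemma finite_compositions: "finite (compositions n k)"
proof (rule finite_subset)
  show "compositions n k \<subseteq> {rs. set rs \<subseteq> {0..n} \<and> length rs = k}"
    by (auto simp: compositions_def member_le_sum_list)
qed (rule finite_lists_length_eq, simp)

lemma fps_power_nth_compositions:
  fixes f :: "'a::comm_ring_1 fps"
  assumes "f $ 0 = 0"
  shows "(f ^ k) $ n = (\<Sum>rs\<in>compositions n k. prod_list (map (\<lambda>r. f $ r) rs))"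
proof (induction k arbitrary: n)
  case 0
  then show ?case by (simp add: compositions_0)
next
  case (Suc k)
  have "(f ^ Suc k) $ n = (\<Sum>i=0..n. f $ i * (f ^ k) $ (n - i))"
    by (simp add: fps_mult_nth)
  also have "\<dots> = (\<Sum>i=1..n. f $ i * (f ^ k) $ (n - i))"
    using assms by (cases n) (simp_all add: sum.atLeast_Suc_atMost)
  also have "\<dots> = (\<Sum>i=1..n. \<Sum>rs\<in>(#) i ` compositions (n - i) k. prod_list (map (\<lambda>r. f $ r) rs))"
    by (simp add: Suc.IH sum_distrib_left sum.reindex)
  also have "\<dots> = (\<Sum>rs\<in>(\<Union>i\<in>{1..n}. (#) i ` compositions (n - i) k). prod_list (map (\<lambda>r. f $ r) rs))"
    by (rule sum.UNION_disjoint[symmetric]) (auto simp: finite_compositions)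
  finally show ?case by (simp add: compositions_Suc)
qed

lemma fps_exp_compose_surj:
  fixes g :: "complex fps"
  assumes "g $ 0 = 1"
  shows "\<exists>F. F $ 0 = 0 \<and> fps_exp 1 oo F = g"
proof (intro exI conjI)
  let ?e = "fps_exp (1::complex) - 1"
  let ?F = "fps_inv ?e oo (g - 1)"
  have g1: "(g - 1) $ 0 = 0" and inv0: "fps_inv ?e $ 0 = 0"
    using assms by (simp_all add: fps_inv_def)
  have "?e oo ?F = (?e oo fps_inv ?e) oo (g - 1)"
    by (rule fps_compose_assoc[OF g1 inv0])
  also have "\<dots> = g - 1"
    using fps_inv_fps_exp_compose(2)[of "1::complex"] g1 by simp
  finally show "fps_exp 1 oo ?F = g"
    by (simp add: fps_compose_sub_distrib)
  show "?F $ 0 = 0" using inv0 by simp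
qed

definition diag :: "(int \<Rightarrow> complex) \<Rightarrow> opr" where
  "diag h v = (\<lambda>j. h j * v j)"

lemma op_comp_list_diag:
  assumes "\<forall>r. 0 < r \<longrightarrow> c r = diag (h r)" and "\<forall>r\<in>set rs. 0 < r"
  shows "op_comp_list c rs v = diag (\<lambda>j. prod_list (map (\<lambda>r. h r j) rs)) v"
  using assms(2)
  by (induction rs arbitrary: v) (simp_all add: op_comp_list_def diag_def assms(1) fun_eq_iff)

lemma op_exp_coef_diag:
  assumes "\<forall>r. 0 < r \<longrightarrow> c r = diag (h r)"
  shows "op_exp_coef c n v j = (fps_exp 1 oo Abs_fps (\<lambda>r. if r = 0 then 0 else h r j)) $ n * v j"
proof -
  let ?F = "Abs_fps (\<lambda>r. if r = 0 then 0 else h r j)"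
  have F_power: "(?F ^ k) $ n = (\<Sum>rs\<in>compositions n k. prod_list (map (\<lambda>r. h r j) rs))" for k
  proof -
    have "(?F ^ k) $ n = (\<Sum>rs\<in>compositions n k. prod_list (map (\<lambda>r. ?F $ r) rs))"
      by (rule fps_power_nth_compositions) simp
    also have "\<dots> = (\<Sum>rs\<in>compositions n k. prod_list (map (\<lambda>r. h r j) rs))"
      by (rule sum.cong[OF refl]) (auto simp: compositions_def intro!: arg_cong[where f = prod_list])
    finally show ?thesis .
  qed
  have "op_exp_coef c n v j
     = (\<Sum>k=0..n. 1 / fact k * (\<Sum>rs\<in>compositions n k. prod_list (map (\<lambda>r. h r j) rs) * v j))"
    unfolding op_exp_coef_def osc_def vsc_def sum_fun_apply
    using op_comp_list_diag[OF assms] by (auto simp: compositions_def diag_def intro!: sum.cong)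
  also have "\<dots> = (\<Sum>k=0..n. 1 / fact k * (?F ^ k) $ n) * v j"
    by (simp add: F_power sum_distrib_right sum_distrib_left mult.assoc)
  also have "\<dots> = (fps_exp 1 oo ?F) $ n * v j"
    by (simp add: fps_compose_nth)
  finally show ?thesis .
qed

lemma module_vsc: "module vsc"
  by unfold_locales (auto simp: vsc_def fun_eq_iff algebra_simps)

lemma Wspace_zero: "0 \<in> Wspace"
  by (simp add: Wspace_def)

lemma Wspace_add: "v \<in> Wspace \<Longrightarrow> w \<in> Wspace \<Longrightarrow> v + w \<in> Wspace"
  unfolding Wspace_def by (auto intro: finite_subset[of _ "{j. v j \<noteq> 0} \<union> {j. w j \<noteq> 0}"])

lemma Wspace_vsc: "v \<in> Wspace \<Longrightarrow> vsc c v \<in> Wspace"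
  unfolding Wspace_def by (auto simp: vsc_def elim!: rev_finite_subset)

lemma Wspace_diag: "v \<in> Wspace \<Longrightarrow> diag h v \<in> Wspace"
  unfolding Wspace_def by (auto simp: diag_def elim!: rev_finite_subset)

lemma Wspace_shift: "v \<in> Wspace \<Longrightarrow> (\<lambda>k. v (k + c)) \<in> Wspace"
proof -
  assume "v \<in> Wspace"
  moreover have "{k. v (k + c) \<noteq> 0} = (\<lambda>j. j - c) ` {j. v j \<noteq> 0}"
    by (auto simp: image_iff intro!: exI[of _ "_ + c"])
  ultimately show ?thesis by (simp add: Wspace_def)
qed

lemma basisv_in_Wspace: "basisv j \<in> Wspace"
proof -
  have "{k. basisv j k \<noteq> 0} = {j}" by (auto simp: basisv_def)
  then show ?thesis by (simp add: Wspace_def)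
qed

lemma basisv_nonzero: "basisv j \<noteq> 0"
  by (auto simp: basisv_def fun_eq_iff)

lemma basisv_inject: "basisv k = basisv j \<longleftrightarrow> k = j"
  by (metis basisv_def zero_neq_one)

lemma sum_closed:
  assumes "0 \<in> U" "\<forall>v\<in>U. \<forall>w\<in>U. v + w \<in> U" "finite S" "\<And>k. k \<in> S \<Longrightarrow> f k \<in> U"
  shows "sum f S \<in> U"
  using assms(3,4) by (induction S rule: finite_induct) (simp_all add: assms(1,2))

lemma Wspace_basis_expansion:
  assumes "v \<in> Wspace"
  shows "v = (\<Sum>k\<in>{j. v j \<noteq> 0}. vsc (v k) (basisv k))"
proof
  fix x
  have "(\<Sum>k\<in>{j. v j \<noteq> 0}. vsc (v k) (basisv k)) x = (\<Sum>k\<in>{j. v j \<noteq> 0}. if k = x then v x else 0)"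
    by (auto simp: sum_fun_apply vsc_def basisv_def intro!: sum.cong)
  also have "\<dots> = v x"
    using assms by (simp add: Wspace_def sum.delta')
  finally show "v x = (\<Sum>k\<in>{j. v j \<noteq> 0}. vsc (v k) (basisv k)) x" ..
qed

lemma span_basisv: "module.span vsc (range basisv) = Wspace"
proof
  have "module.subspace vsc Wspace"
    by (simp add: module.subspace_def[OF module_vsc] Wspace_zero Wspace_add Wspace_vsc)
  then show "module.span vsc (range basisv) \<subseteq> Wspace"
    using basisv_in_Wspace by (intro module.span_minimal[OF module_vsc]) auto
  show "Wspace \<subseteq> module.span vsc (range basisv)"
  proof
    fix v assume v: "v \<in> Wspace"
    have "(\<Sum>k\<in>{j. v j \<noteq> 0}. vsc (v k) (basisv k)) \<in> module.span vsc (range basisv)"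
      by (intro module.span_sum[OF module_vsc] module.span_scale[OF module_vsc]
          module.span_base[OF module_vsc]) auto
    then show "v \<in> module.span vsc (range basisv)"
      using Wspace_basis_expansion[OF v] by simp
  qed
qed

lemma independent_basisv: "\<not> module.dependent vsc (range basisv)"
proof
  assume "module.dependent vsc (range basisv)"
  then obtain t c b where t: "finite t" "t \<subseteq> range basisv" "(\<Sum>v\<in>t. vsc (c v) v) = 0"
    and b: "b \<in> t" "c b \<noteq> 0"
    unfolding module.dependent_explicit[OF module_vsc] by blast
  obtain j where bj: "b = basisv j" using t(2) b(1) by blast
  have "c w * w j = (if w = b then c w else 0)" if w: "w \<in> t" for w
  proof -
    obtain k where wk: "w = basisv k" using w t(2) by blast
    show ?thesis
      by (cases "k = j") (simp_all add: wk bj basisv_inject, simp_all add: basisv_def)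
  qed
  then have "(\<Sum>v\<in>t. vsc (c v) v) j = (\<Sum>w\<in>t. if w = b then c w else 0)"
    by (simp add: sum_fun_apply vsc_def cong: sum.cong)
  also have "\<dots> = c b"
    using t(1) b(1) by (simp add: sum.delta')
  finally have "(\<Sum>v\<in>t. vsc (c v) v) j = c b" .
  then show False using t(3) b(2) by simp
qed

lemma lin_on_diag: "lin_on Wspace (diag h)"
  unfolding lin_on_def using Wspace_diag by (auto simp: diag_def vsc_def fun_eq_iff algebra_simps)

lemma has_parity_diag: "has_parity s 0 (diag h)"
  unfolding has_parity_def Wpar_def using Wspace_diag by (auto simp: diag_def)

locale vector_representation =
  fixes m n :: nat and s :: "int \<Rightarrow> int" and d q u :: complex and N :: int
  assumes parity: "parity_seq m n s"
    and d_nonzero: "d \<noteq> 0" and q_nonzero: "q \<noteq> 0" and u_nonzero: "u \<noteq> 0"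
    and generic: "\<forall>a b c :: int. (d / q) powi a * (q ^ 2) powi b * (inverse (d * q)) powi c = 1
            \<longrightarrow> a = b \<and> b = c"
    and N_def: "N = int (m + n)"
begin

abbreviation E :: "int \<Rightarrow> int \<Rightarrow> opr" where "E \<equiv> Eop s N d q u"
abbreviation F :: "int \<Rightarrow> int \<Rightarrow> opr" where "F \<equiv> Fop s N d q u"
abbreviation \<zeta> :: "int \<Rightarrow> complex" where "\<zeta> \<equiv> aval s d q u"
abbreviation kp :: "int \<Rightarrow> nat \<Rightarrow> int \<Rightarrow> complex" where "kp \<equiv> kp_eig s N d q u"
abbreviation km :: "int \<Rightarrow> nat \<Rightarrow> int \<Rightarrow> complex" where "km \<equiv> km_eig s N d q u"

lemma N_ge_3: "N \<ge> 3"
  using parity N_def by (simp add: parity_seq_def)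

lemma N_pos: "N > 0"
  using N_ge_3 by simp

lemma m_ne_n: "m \<noteq> n"
  using parity by (simp add: parity_seq_def)

lemma card_positive_parities: "card {k \<in> {0..<N}. s k = 1} = m"
  using parity N_def by (simp add: parity_seq_def)

lemma s_cases: "s i = 1 \<or> s i = -1"
  using parity by (simp add: parity_seq_def)

lemma s_square: "s i * s i = 1"
  using s_cases[of i] by auto

lemma s_periodic: "s (i + N * t) = s i"
proof (induction t rule: int_induct[where k = 0])
  case (step1 t)
  have "s (i + N * (t + 1)) = s ((i + N * t) + int (m + n))"
    by (simp add: N_def algebra_simps)
  with step1 parity show ?case by (simp add: parity_seq_def)
next
  case (step2 t)
  have "s (i + N * t) = s ((i + N * (t - 1)) + int (m + n))"
    by (simp add: N_def algebra_simps)
  with step2 parity show ?case by (simp add: parity_seq_def)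
qed simp

lemma s_mod: "s (i mod N) = s i"
  using s_periodic[of "i mod N" "i div N"] by (simp add: mult.commute)

lemma s_cong: "i mod N = j mod N \<Longrightarrow> s i = s j"
  by (metis s_mod)

lemma s_mod_add: "s (x mod N + c) = s (x + c)"
  and s_mod_diff: "s (x mod N - c) = s (x - c)"
  by (rule s_cong, simp add: mod_simps)+

lemma small_dvd_iff: "- N < c \<Longrightarrow> c < N \<Longrightarrow> N dvd c \<longleftrightarrow> c = 0"
proof
  assume c: "- N < c" "c < N" and "N dvd c"
  then obtain t where ct: "c = N * t" by blast
  with c N_pos have "- 1 < t" "t < 1"
    by (simp_all add: mult_less_cancel_left_pos[of N "-1" t, simplified] mult_less_cancel_left_pos[of N t 1, simplified])
  then show "c = 0" using ct by simp
qed simp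

text \<open>Congruences between shifts of one index, as they arise from the definitions of the
  operators, reduce to divisibility of a small constant by \<open>N\<close>, which \<open>small_dvd_iff\<close>
  then decides.\<close>

lemma mod_N_shift_eq_iff:
  "x mod N = (x + b) mod N \<longleftrightarrow> N dvd b"
  "x mod N = (b + x) mod N \<longleftrightarrow> N dvd b"
  "x mod N = (x - b) mod N \<longleftrightarrow> N dvd b"
  "(x + a) mod N = x mod N \<longleftrightarrow> N dvd a"
  "(x + a) mod N = (x + b) mod N \<longleftrightarrow> N dvd (a - b)"
  "(x + a) mod N = (b + x) mod N \<longleftrightarrow> N dvd (a - b)"
  "(x + a) mod N = (x - b) mod N \<longleftrightarrow> N dvd (a + b)"
  "(a + x) mod N = x mod N \<longleftrightarrow> N dvd a"
  "(a + x) mod N = (x + b) mod N \<longleftrightarrow> N dvd (a - b)"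
  "(a + x) mod N = (b + x) mod N \<longleftrightarrow> N dvd (a - b)"
  "(a + x) mod N = (x - b) mod N \<longleftrightarrow> N dvd (a + b)"
  "(x - a) mod N = x mod N \<longleftrightarrow> N dvd a"
  "(x - a) mod N = (x + b) mod N \<longleftrightarrow> N dvd (a + b)"
  "(x - a) mod N = (b + x) mod N \<longleftrightarrow> N dvd (a + b)"
  "(x - a) mod N = (x - b) mod N \<longleftrightarrow> N dvd (a - b)"
  by (simp_all add: mod_eq_dvd_iff flip: dvd_minus_iff[of N "a + b"] dvd_minus_iff[of N "a - b"])

lemmas mod_N_simps = mod_N_shift_eq_iff small_dvd_iff

lemma pred_mod_ne: "(x - 1) mod N \<noteq> x mod N"
  using N_ge_3 by (simp add: mod_N_simps)

lemma zeta_Suc: "\<zeta> (j + 1) = inverse (d * q) powi s (j + 1) * \<zeta> j"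
  by (simp add: aval_def sbar_Suc power_int_add d_nonzero q_nonzero)

lemma zeta_nonzero: "\<zeta> j \<noteq> 0"
  by (simp add: aval_def d_nonzero q_nonzero u_nonzero)

lemma zeta_pred: "\<zeta> l = d powi s (l + 1) * q powi s (l + 1) * \<zeta> (l + 1)"
  using zeta_Suc[of l] d_nonzero q_nonzero
  by (simp add: power_int_minus power_int_mult_distrib field_simps)

lemma zeta_succ: "\<zeta> l = d powi (- s l) * q powi (- s l) * \<zeta> (l - 1)"
  using zeta_pred[of "l - 1"] d_nonzero q_nonzero
  by (simp add: power_int_minus field_simps)

lemma q3_powi_eq_1: "inverse (d * q) powi c = 1 \<Longrightarrow> c = 0"
  using generic[rule_format, of 0 0 c] by simp

lemma q_square_ne_1: "q ^ 2 \<noteq> 1"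
  using generic[rule_format, of 0 1 0] by auto

lemma q_minus_inverse_nonzero: "q - inverse q \<noteq> 0"
proof
  assume "q - inverse q = 0"
  then have "q * q = 1" using q_nonzero by (simp add: field_simps)
  then show False using q_square_ne_1 by (simp add: power2_eq_square)
qed

lemma q_powi_s_ne: "q powi (s j) \<noteq> q powi (- s j)"
  using s_cases[of j] q_nonzero q_minus_inverse_nonzero
  by (auto simp: power_int_minus field_simps)

lemma q_powi_s_ne_1: "q powi (s j) \<noteq> 1" "q powi (- s j) \<noteq> 1"
  using s_cases[of j] q_square_ne_1 q_nonzero
  by (auto simp: power_int_minus power2_eq_square)

lemma sum_s_period: "(\<Sum>k\<in>{0..<N}. s k) = int m - int n"
proof -
  have "(\<Sum>k\<in>{0..<N}. s k) = (\<Sum>k\<in>{0..<N}. 2 * (if s k = 1 then 1 else 0) - 1)"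
    using s_cases by (intro sum.cong) auto
  also have "\<dots> = 2 * (\<Sum>k\<in>{0..<N}. if s k = 1 then 1 else 0) - N"
    using N_pos by (simp add: sum_subtractf sum_distrib_left)
  also have "(\<Sum>k\<in>{0..<N}. if s k = 1 then 1 else 0) = int (card {k \<in> {0..<N}. s k = 1})"
    by (simp add: sum.If_cases Int_def)
  finally show ?thesis
    using card_positive_parities by (simp add: N_def)
qed

lemma sbar_add_N: "sbar s (j + N) = sbar s j + (int m - int n)"
proof -
  define D where "D j = sbar s (j + N) - sbar s j" for j
  have "D (j + 1) = D j" for j
    using sbar_Suc[of s "j + N"] sbar_Suc[of s j] s_periodic[of "j + 1" 1]
    by (simp add: D_def ac_simps)
  then have "D j = D 0"
    by (induction j rule: int_induct[where k = 0]) (simp_all, metis diff_add_cancel)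
  moreover have "D 0 = (\<Sum>k\<in>{1..N}. s k)"
    using N_pos by (simp add: D_def sbar_def)
  moreover have "(\<Sum>k\<in>{1..N}. s k) = (\<Sum>k\<in>{0..<N}. s k)"
  proof -
    have "{1..N} = insert N {1..<N}" "{0..<N} = insert 0 {1..<N}" using N_pos by auto
    then show ?thesis using s_periodic[of 0 1] by simp
  qed
  ultimately show ?thesis by (simp add: D_def sum_s_period)
qed

lemma sbar_add_N_mult: "sbar s (j + N * t) = sbar s j + t * (int m - int n)"
proof (induction t rule: int_induct[where k = 0])
  case (step1 t)
  have "j + N * (t + 1) = (j + N * t) + N" by (simp add: algebra_simps)
  then have "sbar s (j + N * (t + 1)) = sbar s (j + N * t) + (int m - int n)"
    by (simp only: sbar_add_N)
  with step1 show ?case by (simp add: algebra_simps)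
next
  case (step2 t)
  have "j + N * t = (j + N * (t - 1)) + N" by (simp add: algebra_simps)
  then show ?case using step2 sbar_add_N[of "j + N * (t - 1)"] by (simp add: algebra_simps)
qed simp

text \<open>Within a residue class the spectral parameters differ by the powers
  \<open>q\<^sub>3\<^bsup>t(m - n)\<^esup>\<close>, which are \<open>\<noteq> 1\<close> for \<open>t \<noteq> 0\<close> by genericity and \<open>m \<noteq> n\<close>.\<close>

lemma zeta_inj_on_class:
  assumes "k mod N = j mod N" and "\<zeta> k = \<zeta> j"
  shows "k = j"
proof -
  obtain t where kt: "k = j + N * t"
    using assms(1) by (metis mod_eq_dvd_iff dvdE diff_add_cancel add.commute)
  have "\<zeta> k = inverse (d * q) powi (t * (int m - int n)) * \<zeta> j"
    by (simp add: kt aval_def sbar_add_N_mult power_int_add d_nonzero q_nonzero)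
  then have "t * (int m - int n) = 0"
    using assms(2) zeta_nonzero[of j] by (intro q3_powi_eq_1) simp
  then show ?thesis using kt m_ne_n by simp
qed

lemma E_add: "E i r (v + w) = E i r v + E i r w"
  and E_diff: "E i r (v - w) = E i r v - E i r w"
  and E_uminus: "E i r (- v) = - E i r v"
  and E_zero: "E i r 0 = 0"
  and E_vsc: "E i r (vsc c v) = vsc c (E i r v)"
  by (simp_all add: Eop_def vsc_def fun_eq_iff algebra_simps)

lemma F_add: "F i r (v + w) = F i r v + F i r w"
  and F_diff: "F i r (v - w) = F i r v - F i r w"
  and F_uminus: "F i r (- v) = - F i r v"
  and F_zero: "F i r 0 = 0"
  and F_vsc: "F i r (vsc c v) = vsc c (F i r v)"
  by (simp_all add: Fop_def vsc_def fun_eq_iff algebra_simps)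

lemma vsc_add: "vsc c (v + w) = vsc c v + vsc c w"
  and vsc_diff: "vsc c (v - w) = vsc c v - vsc c w"
  and vsc_uminus: "vsc c (- v) = - vsc c v"
  and vsc_zero: "vsc c 0 = 0"
  and vsc_vsc: "vsc c (vsc c' v) = vsc (c * c') v"
  by (simp_all add: vsc_def fun_eq_iff algebra_simps)

lemmas linear_simps = E_add E_diff E_uminus E_zero E_vsc F_add F_diff F_uminus F_zero F_vsc
  vsc_add vsc_diff vsc_uminus vsc_zero vsc_vsc

lemma E_Wspace: "v \<in> Wspace \<Longrightarrow> E i r v \<in> Wspace"
  using Wspace_shift[of v "- 1"] unfolding Wspace_def mem_Collect_eq
  by (rule rev_finite_subset) (auto simp: Eop_def)

lemma F_Wspace: "v \<in> Wspace \<Longrightarrow> F i r v \<in> Wspace"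
  using Wspace_shift[of v 1] unfolding Wspace_def mem_Collect_eq
  by (rule rev_finite_subset) (auto simp: Fop_def)

lemma lin_on_E: "lin_on Wspace (E i r)"
  and lin_on_F: "lin_on Wspace (F i r)"
  by (simp_all add: lin_on_def E_Wspace F_Wspace E_add E_vsc F_add F_vsc)

lemma vpar_Suc: "vpar s (x + 1) = (vpar s x + deg s x) mod 2"
  and vpar_pred: "vpar s x = (vpar s (x + 1) + deg s x) mod 2"
  using s_cases[of x] s_cases[of "x + 1"] by (auto simp: vpar_def deg_def)

lemma deg_cong:
  assumes "k mod N = i mod N"
  shows "deg s k = deg s i"
proof -
  have "(k + 1) mod N = (i + 1) mod N" using assms by (metis mod_add_left_eq)
  then show ?thesis using s_cong[OF assms] s_cong[of "k + 1" "i + 1"] by (simp add: deg_def)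
qed

lemma has_parity_E: "has_parity s (deg s i) (E i r)"
  unfolding has_parity_def Wpar_def
proof (intro ballI CollectI conjI allI impI)
  fix p v k
  assume p: "p \<in> {0, 1::int}" and v: "v \<in> {v \<in> Wspace. \<forall>j. v j \<noteq> 0 \<longrightarrow> vpar s j = p}"
  then show "E i r v \<in> Wspace" using E_Wspace by blast
  assume "E i r v k \<noteq> 0"
  then have cls: "(k - 1) mod N = i mod N" and "v (k - 1) \<noteq> 0"
    by (auto simp: Eop_def split: if_splits)
  then have "vpar s (k - 1) = p" using v by blast
  moreover have "vpar s k = (vpar s (k - 1) + deg s (k - 1)) mod 2"
    using vpar_Suc[of "k - 1"] by simp
  ultimately show "vpar s k = (p + deg s i) mod 2"
    by (simp only: deg_cong[OF cls])
qed

lemma has_parity_F: "has_parity s (deg s i) (F i r)"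
  unfolding has_parity_def Wpar_def
proof (intro ballI CollectI conjI allI impI)
  fix p v k
  assume p: "p \<in> {0, 1::int}" and v: "v \<in> {v \<in> Wspace. \<forall>j. v j \<noteq> 0 \<longrightarrow> vpar s j = p}"
  then show "F i r v \<in> Wspace" using F_Wspace by blast
  assume "F i r v k \<noteq> 0"
  then have cls: "k mod N = i mod N" and "v (k + 1) \<noteq> 0"
    by (auto simp: Fop_def split: if_splits)
  then have "vpar s (k + 1) = p" using v by blast
  with vpar_pred[of k] show "vpar s k = (p + deg s i) mod 2"
    by (simp only: deg_cong[OF cls])
qed

lemma E_E_apply:
  "E x a (E y b v) k = (if (k - 1) mod N = x mod N \<and> (k - 2) mod N = y mod N
     then \<zeta> (k - 1) powi a * \<zeta> (k - 2) powi b * v (k - 2) else 0)"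
  unfolding Eop_def by simp

lemma F_F_apply:
  "F x a (F y b v) k = (if k mod N = x mod N \<and> (k + 1) mod N = y mod N
     then of_int (s (k + 1)) * \<zeta> k powi a * (of_int (s (k + 1 + 1)) * \<zeta> (k + 1) powi b * v (k + 1 + 1))
     else 0)"
  unfolding Fop_def by simp

lemma E_E_vanish:
  assumes "x mod N \<noteq> (y + 1) mod N"
  shows "E x a (E y b v) = 0"
proof
  fix k
  have "(k - 1) mod N \<noteq> x mod N \<or> (k - 2) mod N \<noteq> y mod N"
  proof (rule ccontr)
    assume "\<not> ?thesis"
    then have "(k - 1) mod N = x mod N" and "(k - 2) mod N = y mod N" by auto
    then have "(k - 2 + 1) mod N = (y + 1) mod N" by (metis mod_add_left_eq)
    with \<open>(k - 1) mod N = x mod N\<close> assms show False by simp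
  qed
  then show "E x a (E y b v) k = 0 k" by (auto simp: E_E_apply)
qed

lemma F_F_vanish:
  assumes "x mod N \<noteq> (y - 1) mod N"
  shows "F x a (F y b v) = 0"
proof
  fix k
  have "k mod N \<noteq> x mod N \<or> (k + 1) mod N \<noteq> y mod N"
  proof (rule ccontr)
    assume "\<not> ?thesis"
    then have "k mod N = x mod N" and "(k + 1) mod N = y mod N" by auto
    then have "(k + 1 - 1) mod N = (y - 1) mod N" by (metis mod_diff_left_eq)
    with \<open>k mod N = x mod N\<close> assms show False by simp
  qed
  then show "F x a (F y b v) k = 0 k" by (auto simp: F_F_apply)
qed

lemma Acart_diag: "Acart s N i i = s i + s (i + 1)"
  using N_ge_3 by (simp add: Acart_def mod_N_simps)

lemma Acart_sym: "Acart s N x y = Acart s N y x"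
proof -
  have "x mod N = y mod N \<Longrightarrow> s x + s (x + 1) = s y + s (y + 1)"
    by (metis s_cong mod_add_left_eq)
  then show ?thesis unfolding Acart_def by (auto simp: eq_commute)
qed

lemma Acart_Mmat_succ:
  assumes "0 \<le> i" "i < N" and "i mod N = (j + 1) mod N"
  shows "Acart s N i j = - s (j + 1)" and "Mmat s N i j = s (j + 1)"
proof -
  have i: "i = (j + 1) mod N" using assms by simp
  show "Acart s N i j = - s (j + 1)" "Mmat s N i j = s (j + 1)"
    unfolding i using N_ge_3 by (simp_all add: Acart_def Mmat_def mod_N_simps mod_simps s_mod)
qed

lemma Acart_Mmat_pred:
  assumes "0 \<le> j" "j < N" and "j mod N = (i + 1) mod N"
  shows "Acart s N i j = - s (i + 1)" and "Mmat s N i j = - s (i + 1)"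
proof -
  have j: "j = (i + 1) mod N" using assms by simp
  show "Acart s N i j = - s (i + 1)" "Mmat s N i j = - s (i + 1)"
    unfolding j using N_ge_3 by (simp_all add: Acart_def Mmat_def mod_N_simps mod_simps s_mod)
qed

lemma mod_pred_eq_iff: "i mod N = (j - 1) mod N \<longleftrightarrow> j mod N = (i + 1) mod N"
  by (metis add_diff_cancel_right' diff_add_cancel mod_add_left_eq mod_diff_left_eq)

lemma not_mutually_succ: "i mod N = (j + 1) mod N \<Longrightarrow> j mod N \<noteq> (i + 1) mod N"
proof
  assume "i mod N = (j + 1) mod N" and "j mod N = (i + 1) mod N"
  then have "j mod N = (j + 1 + 1) mod N" by (metis mod_add_left_eq)
  then show False using N_ge_3 by (simp add: mod_N_simps)
qed

subsection \<open>Realising \<open>K\<^sub>i\<^sup>\<plusminus>(z)\<close> by diagonal operators\<close>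

lemma kp_0: "kp i 0 j = (if j mod N = i mod N then q powi (- s j)
    else if (j - 1) mod N = i mod N then q powi (s j) else 1)"
  by (simp add: kp_eig_def psi_inf_explicit)

lemma km_0: "km i 0 j = (if j mod N = i mod N then q powi (s j)
    else if (j - 1) mod N = i mod N then q powi (- s j) else 1)"
  by (simp add: km_eig_def psi_zero_explicit)

lemma kp_0_nonzero: "kp i 0 j \<noteq> 0" and km_0_nonzero: "km i 0 j \<noteq> 0"
  by (simp_all add: kp_0 km_0 q_nonzero)

lemma kp_0_km_0: "kp i 0 j * km i 0 j = 1" and km_0_kp_0: "km i 0 j * kp i 0 j = 1"
  by (simp_all add: kp_0 km_0 q_nonzero power_int_minus)

definition K_op :: "int \<Rightarrow> opr" where
  "K_op i = diag (\<lambda>j. kp i 0 j)"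

definition Kinv_op :: "int \<Rightarrow> opr" where
  "Kinv_op i = diag (\<lambda>j. km i 0 j)"

text \<open>The eigenvalues of \<open>H\<^sub>i\<^sub>,\<^sub>\<plusminus>\<^sub>r\<close> on \<open>[u]\<^sup>j\<close> are, up to the factor \<open>\<plusminus>(q - q\<inverse>)\<close>,
  the coefficients of the logarithm of the normalised eigenvalue series of \<open>K\<^sub>i\<^sup>\<plusminus>(z)\<close>.\<close>

definition log_kp :: "int \<Rightarrow> int \<Rightarrow> complex fps" where
  "log_kp i j = (SOME L. L $ 0 = 0 \<and> fps_exp 1 oo L = Abs_fps (\<lambda>r. kp i r j / kp i 0 j))"

definition log_km :: "int \<Rightarrow> int \<Rightarrow> complex fps" where
  "log_km i j = (SOME L. L $ 0 = 0 \<and> fps_exp 1 oo L = Abs_fps (\<lambda>r. km i r j / km i 0 j))"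

definition H_op :: "int \<Rightarrow> int \<Rightarrow> opr" where
  "H_op i r = (if 0 < r then diag (\<lambda>j. log_kp i j $ nat r / (q - inverse q))
               else if r < 0 then diag (\<lambda>j. log_km i j $ nat (- r) / (- (q - inverse q)))
               else diag (\<lambda>j. 0))"

lemma log_kp: "log_kp i j $ 0 = 0" "fps_exp 1 oo log_kp i j = Abs_fps (\<lambda>r. kp i r j / kp i 0 j)"
proof -
  have "Abs_fps (\<lambda>r. kp i r j / kp i 0 j) $ 0 = 1" using kp_0_nonzero by simp
  from someI_ex[OF fps_exp_compose_surj[OF this]]
  show "log_kp i j $ 0 = 0" "fps_exp 1 oo log_kp i j = Abs_fps (\<lambda>r. kp i r j / kp i 0 j)"
    unfolding log_kp_def by blast+
qed

lemma log_km: "log_km i j $ 0 = 0" "fps_exp 1 oo log_km i j = Abs_fps (\<lambda>r. km i r j / km i 0 j)"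
proof -
  have "Abs_fps (\<lambda>r. km i r j / km i 0 j) $ 0 = 1" using km_0_nonzero by simp
  from someI_ex[OF fps_exp_compose_surj[OF this]]
  show "log_km i j $ 0 = 0" "fps_exp 1 oo log_km i j = Abs_fps (\<lambda>r. km i r j / km i 0 j)"
    unfolding log_km_def by blast+
qed

lemma Kplus_eq: "Kplus q K_op H_op i r = KpW s N d q u i r"
proof (intro ext)
  fix v j
  have H: "\<forall>r. 0 < r \<longrightarrow> osc (q - inverse q) (H_op i (int r)) = diag (\<lambda>j. log_kp i j $ r)"
    using q_minus_inverse_nonzero by (auto simp: osc_def vsc_def H_op_def diag_def fun_eq_iff)
  have L: "Abs_fps (\<lambda>r. if r = 0 then 0 else log_kp i j $ r) = log_kp i j"
    using log_kp(1) by (intro fps_ext) simp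
  have "Kplus q K_op H_op i r v j
      = kp i 0 j * ((fps_exp 1 oo log_kp i j) $ r * v j)"
    by (simp add: Kplus_def K_op_def diag_def op_exp_coef_diag[OF H] L)
  also have "\<dots> = kp i r j * v j"
    using kp_0_nonzero by (simp add: log_kp(2))
  finally show "Kplus q K_op H_op i r v j = KpW s N d q u i r v j"
    by (simp add: KpW_def)
qed

lemma Kminus_eq: "Kminus q Kinv_op H_op i r = KmW s N d q u i r"
proof (intro ext)
  fix v j
  have H: "\<forall>r. 0 < r \<longrightarrow> osc (- (q - inverse q)) (H_op i (- int r)) = diag (\<lambda>j. log_km i j $ r)"
    using q_minus_inverse_nonzero by (auto simp: osc_def vsc_def H_op_def diag_def fun_eq_iff)
  have L: "Abs_fps (\<lambda>r. if r = 0 then 0 else log_km i j $ r) = log_km i j"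
    using log_km(1) by (intro fps_ext) simp
  have "Kminus q Kinv_op H_op i r v j
      = km i 0 j * op_exp_coef (\<lambda>r. osc (- (q - inverse q)) (H_op i (- int r))) r v j"
    by (simp add: Kminus_def Kinv_op_def diag_def)
  also have "\<dots> = km i 0 j * ((fps_exp 1 oo log_km i j) $ r * v j)"
    by (simp only: op_exp_coef_diag[OF H] L)
  also have "\<dots> = km i r j * v j"
    using km_0_nonzero by (simp add: log_km(2))
  finally show "Kminus q Kinv_op H_op i r v j = KmW s N d q u i r v j"
    by (simp add: KmW_def)
qed

text \<open>Coefficient of \<open>z\<^sup>-\<^sup>t\<close>, for all \<open>t \<in> \<int>\<close>, of the expansion of \<open>\<psi>\<^sub>k(a/z)\<close> at \<open>\<infinity>\<close>
  resp. at \<open>0\<close>.\<close>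

definition psi_inf_coeff :: "int \<Rightarrow> complex \<Rightarrow> int \<Rightarrow> complex" where
  "psi_inf_coeff k a t =
     (if t < 0 then 0 else if t = 0 then q powi k else (q powi k - q powi (- k)) * a powi t)"

definition psi_zero_coeff :: "int \<Rightarrow> complex \<Rightarrow> int \<Rightarrow> complex" where
  "psi_zero_coeff k a t =
     (if 0 < t then 0 else if t = 0 then q powi (- k) else (q powi (- k) - q powi k) * a powi t)"

definition kp_coeff :: "int \<Rightarrow> int \<Rightarrow> int \<Rightarrow> complex" where
  "kp_coeff i t x = (if t < 0 then 0 else kp i (nat t) x)"

definition km_coeff :: "int \<Rightarrow> int \<Rightarrow> int \<Rightarrow> complex" where
  "km_coeff i t x = (if 0 < t then 0 else km i (nat (- t)) x)"

lemma kp_coeff_self: "x mod N = i mod N \<Longrightarrow> kp_coeff i t x = psi_inf_coeff (- s x) (\<zeta> x) t"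
  and kp_coeff_next: "(x - 1) mod N = i mod N \<Longrightarrow> x mod N \<noteq> i mod N \<Longrightarrow>
    kp_coeff i t x = psi_inf_coeff (s x) (\<zeta> (x - 1)) t"
  and kp_coeff_other: "x mod N \<noteq> i mod N \<Longrightarrow> (x - 1) mod N \<noteq> i mod N \<Longrightarrow>
    kp_coeff i t x = (if t = 0 then 1 else 0)"
  by (auto simp: kp_coeff_def kp_eig_def psi_inf_coeff_def psi_inf_explicit power_int_def)

lemma km_coeff_self: "x mod N = i mod N \<Longrightarrow> km_coeff i t x = psi_zero_coeff (- s x) (\<zeta> x) t"
  and km_coeff_next: "(x - 1) mod N = i mod N \<Longrightarrow> x mod N \<noteq> i mod N \<Longrightarrow>
    km_coeff i t x = psi_zero_coeff (s x) (\<zeta> (x - 1)) t"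
  and km_coeff_other: "x mod N \<noteq> i mod N \<Longrightarrow> (x - 1) mod N \<noteq> i mod N \<Longrightarrow>
    km_coeff i t x = (if t = 0 then 1 else 0)"
  by (auto simp: km_coeff_def km_eig_def psi_zero_coeff_def psi_zero_explicit power_int_def
      power_inverse)

lemmas K_coeff_simps = kp_coeff_self kp_coeff_next kp_coeff_other
  km_coeff_self km_coeff_next km_coeff_other

text \<open>The identities
  \<open>(z - q\<^bsup>\<sigma>+\<tau>\<^esup>a) \<psi>\<^sub>\<tau>(a/z) = (q\<^bsup>\<sigma>+\<tau>\<^esup>z - a) \<psi>\<^sub>-\<^sub>\<sigma>(a/z)\<close> for \<open>\<sigma>, \<tau> = \<plusminus>1\<close> and
  \<open>(d\<^sup>\<tau>z - q\<^sup>-\<^sup>\<tau>a) \<psi>\<^sub>-\<^sub>\<tau>(b/z) = d\<^sup>\<tau>q\<^sup>-\<^sup>\<tau>z - a\<close> for \<open>a = (dq)\<^sup>\<tau>b\<close>,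
  read off coefficientwise in both expansions.\<close>

lemma psi_inf_coeff_exchange:
  assumes "a \<noteq> 0" and "\<sigma> = 1 \<or> \<sigma> = -1" "\<tau> = 1 \<or> \<tau> = -1"
  shows "psi_inf_coeff \<tau> a (r + 1) - q powi (\<sigma> + \<tau>) * a * psi_inf_coeff \<tau> a r
       = q powi (\<sigma> + \<tau>) * psi_inf_coeff (- \<sigma>) a (r + 1) - a * psi_inf_coeff (- \<sigma>) a r"
proof -
  consider "r < -1" | "r = -1" | "r = 0" | "r > 0" by linarith
  then show ?thesis
  proof cases
    case 4
    then have "a powi (r + 1) = a * a powi r" "a powi (1 + r) = a * a powi r"
      using assms(1) by (simp_all add: power_int_add)
    with 4 assms(2,3) q_nonzero show ?thesis
      by (auto simp: psi_inf_coeff_def field_simps power_int_minus power2_eq_square)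
  qed (use assms(2,3) q_nonzero in \<open>auto simp: psi_inf_coeff_def field_simps power_int_minus power2_eq_square\<close>)
qed

lemma psi_zero_coeff_exchange:
  assumes "a \<noteq> 0" and "\<sigma> = 1 \<or> \<sigma> = -1" "\<tau> = 1 \<or> \<tau> = -1"
  shows "psi_zero_coeff \<tau> a (r + 1) - q powi (\<sigma> + \<tau>) * a * psi_zero_coeff \<tau> a r
       = q powi (\<sigma> + \<tau>) * psi_zero_coeff (- \<sigma>) a (r + 1) - a * psi_zero_coeff (- \<sigma>) a r"
proof -
  consider "r < -1" | "r = -1" | "r = 0" | "r > 0" by linarith
  then show ?thesis
  proof cases
    case 1
    then have "a powi (r + 1) = a * a powi r" "a powi (1 + r) = a * a powi r"
      using assms(1) by (simp_all add: power_int_add)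
    with 1 assms(2,3) q_nonzero show ?thesis
      by (auto simp: psi_zero_coeff_def field_simps power_int_minus power2_eq_square)
  qed (use assms q_nonzero in \<open>auto simp: psi_zero_coeff_def field_simps power_int_minus power2_eq_square\<close>)
qed

lemma psi_inf_coeff_absorb:
  assumes "b \<noteq> 0" and "a = d powi \<tau> * q powi \<tau> * b"
  shows "d powi \<tau> * psi_inf_coeff (- \<tau>) b (r + 1) - q powi (- \<tau>) * a * psi_inf_coeff (- \<tau>) b r
       = d powi \<tau> * q powi (- \<tau>) * (if r + 1 = 0 then 1 else 0) - a * (if r = 0 then 1 else 0)"
proof -
  consider "r < -1" | "r = -1" | "r = 0" | "r > 0" by linarith
  then show ?thesis
  proof cases
    case 4
    have "b powi (r + 1) = b * b powi r" "b powi (1 + r) = b * b powi r"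
      using assms(1) by (simp_all add: power_int_add)
    with 4 q_nonzero d_nonzero show ?thesis
      unfolding assms(2) by (simp add: psi_inf_coeff_def field_simps power_int_minus)
  qed (use q_nonzero d_nonzero assms in \<open>auto simp: psi_inf_coeff_def field_simps power_int_minus\<close>)
qed

lemma psi_inf_coeff_emit:
  assumes "b \<noteq> 0" and "a = d powi (- \<sigma>) * q powi (- \<sigma>) * b"
  shows "d powi (- \<sigma>) * (if r + 1 = 0 then 1 else 0) - q powi (- \<sigma>) * a * (if r = 0 then 1 else 0)
       = d powi (- \<sigma>) * q powi (- \<sigma>) * psi_inf_coeff \<sigma> b (r + 1) - a * psi_inf_coeff \<sigma> b r"
proof -
  consider "r < -1" | "r = -1" | "r = 0" | "r > 0" by linarith
  then show ?thesis
  proof cases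
    case 4
    have "b powi (r + 1) = b * b powi r" "b powi (1 + r) = b * b powi r"
      using assms(1) by (simp_all add: power_int_add)
    with 4 q_nonzero d_nonzero show ?thesis
      unfolding assms(2) by (simp add: psi_inf_coeff_def field_simps power_int_minus)
  qed (use q_nonzero d_nonzero assms in \<open>auto simp: psi_inf_coeff_def field_simps power_int_minus\<close>)
qed

lemma psi_zero_coeff_absorb:
  assumes "b \<noteq> 0" and "a = d powi \<tau> * q powi \<tau> * b"
  shows "d powi \<tau> * psi_zero_coeff (- \<tau>) b (r + 1) - q powi (- \<tau>) * a * psi_zero_coeff (- \<tau>) b r
       = d powi \<tau> * q powi (- \<tau>) * (if r + 1 = 0 then 1 else 0) - a * (if r = 0 then 1 else 0)"
proof -
  consider "r < -1" | "r = -1" | "r = 0" | "r > 0" by linarith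
  then show ?thesis
  proof cases
    case 1
    have "b powi (r + 1) = b * b powi r" "b powi (1 + r) = b * b powi r"
      using assms(1) by (simp_all add: power_int_add)
    with 1 q_nonzero d_nonzero show ?thesis
      unfolding assms(2) by (simp add: psi_zero_coeff_def field_simps power_int_minus)
  qed (use q_nonzero d_nonzero assms in \<open>auto simp: psi_zero_coeff_def field_simps power_int_minus\<close>)
qed

lemma psi_zero_coeff_emit:
  assumes "b \<noteq> 0" and "a = d powi (- \<sigma>) * q powi (- \<sigma>) * b"
  shows "d powi (- \<sigma>) * (if r + 1 = 0 then 1 else 0) - q powi (- \<sigma>) * a * (if r = 0 then 1 else 0)
       = d powi (- \<sigma>) * q powi (- \<sigma>) * psi_zero_coeff \<sigma> b (r + 1) - a * psi_zero_coeff \<sigma> b r"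
proof -
  consider "r < -1" | "r = -1" | "r = 0" | "r > 0" by linarith
  then show ?thesis
  proof cases
    case 1
    have "b powi (r + 1) = b * b powi r" "b powi (1 + r) = b * b powi r"
      using assms(1) by (simp_all add: power_int_add)
    with 1 q_nonzero d_nonzero show ?thesis
      unfolding assms(2) by (simp add: psi_zero_coeff_def field_simps power_int_minus)
  qed (use q_nonzero d_nonzero assms in \<open>auto simp: psi_zero_coeff_def field_simps power_int_minus\<close>)
qed

lemma index_cases:
  assumes "0 \<le> i" "i < N"
    and "i = l mod N \<Longrightarrow> P" and "i = (l + 1) mod N \<Longrightarrow> P" and "i = (l - 1) mod N \<Longrightarrow> P"
    and "i \<noteq> l mod N \<Longrightarrow> i \<noteq> (l + 1) mod N \<Longrightarrow> i \<noteq> (l - 1) mod N \<Longrightarrow>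
          (i + 1) mod N \<noteq> l mod N \<Longrightarrow> (i - 1) mod N \<noteq> l mod N \<Longrightarrow> P"
  shows P
proof -
  have i: "i mod N = i" using assms(1,2) by simp
  have "(i + 1) mod N \<noteq> l mod N" if "i \<noteq> (l - 1) mod N"
    using that mod_pred_eq_iff[of i l] i by metis
  moreover have "(i - 1) mod N \<noteq> l mod N" if "i \<noteq> (l + 1) mod N"
    using that mod_pred_eq_iff[of l i] i by metis
  ultimately show P using assms(3-6) by blast
qed

text \<open>Relation (3) between \<open>K\<^sub>i\<^sup>\<plusminus>(z)\<close> and \<open>E\<^sub>j(w)\<close> on \<open>[u]\<^sup>l\<close>, \<open>l \<equiv> j\<close>, in terms of the
  coefficients \<open>f t x\<close> of the eigenvalue of \<open>K\<^sub>i\<^sup>\<plusminus>(z)\<close> on \<open>[u]\<^sup>x\<close>: it says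
  \<open>(d\<^sup>Mz - q\<^sup>A\<zeta>\<^sub>l) f\<^sub>l\<^sub>+\<^sub>1(z) = (d\<^sup>Mq\<^sup>Az - \<zeta>\<^sub>l) f\<^sub>l(z)\<close>. The cases \<open>i \<equiv> l, l + 1, l - 1\<close> are
  the three identities above; for other \<open>i\<close> both sides are trivial.\<close>

definition relation3_scalar :: "(int \<Rightarrow> int \<Rightarrow> complex) \<Rightarrow> int \<Rightarrow> int \<Rightarrow> int \<Rightarrow> bool" where
  "relation3_scalar f i j l \<longleftrightarrow> (\<forall>r.
     d powi Mmat s N i j * f (r + 1) (l + 1) - q powi Acart s N i j * \<zeta> l * f r (l + 1)
       = d powi Mmat s N i j * q powi Acart s N i j * f (r + 1) l - \<zeta> l * f r l)"

lemma relation3_scalar_self: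
  assumes "i = l mod N" and "j = l mod N"
  shows "relation3_scalar (kp_coeff i) i j l \<and> relation3_scalar (km_coeff i) i j l"
proof -
  have v: "kp_coeff i t (l + 1) = psi_inf_coeff (s (l + 1)) (\<zeta> l) t"
          "kp_coeff i t l = psi_inf_coeff (- s l) (\<zeta> l) t"
          "km_coeff i t (l + 1) = psi_zero_coeff (s (l + 1)) (\<zeta> l) t"
          "km_coeff i t l = psi_zero_coeff (- s l) (\<zeta> l) t" for t
    unfolding assms using N_ge_3 by (simp_all add: K_coeff_simps mod_N_simps mod_simps)
  have "Acart s N i j = s l + s (l + 1)" and "Mmat s N i j = 0"
    unfolding assms using N_ge_3 by (simp_all add: Acart_def Mmat_def mod_N_simps mod_simps s_mod s_mod_add)
  then show ?thesis unfolding relation3_scalar_def v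
    using psi_inf_coeff_exchange[OF zeta_nonzero s_cases s_cases]
      psi_zero_coeff_exchange[OF zeta_nonzero s_cases s_cases] by simp
qed

lemma relation3_scalar_succ:
  assumes "i = (l + 1) mod N" and "j = l mod N"
  shows "relation3_scalar (kp_coeff i) i j l \<and> relation3_scalar (km_coeff i) i j l"
proof -
  have v: "kp_coeff i t (l + 1) = psi_inf_coeff (- s (l + 1)) (\<zeta> (l + 1)) t"
          "kp_coeff i t l = (if t = 0 then 1 else 0)"
          "km_coeff i t (l + 1) = psi_zero_coeff (- s (l + 1)) (\<zeta> (l + 1)) t"
          "km_coeff i t l = (if t = 0 then 1 else 0)" for t
    unfolding assms using N_ge_3 by (simp_all add: K_coeff_simps mod_N_simps mod_simps)
  have "Acart s N i j = - s (l + 1)" and "Mmat s N i j = s (l + 1)"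
    unfolding assms using N_ge_3 by (simp_all add: Acart_def Mmat_def mod_N_simps mod_simps s_mod s_mod_add)
  then show ?thesis unfolding relation3_scalar_def v
    using psi_inf_coeff_absorb[OF zeta_nonzero zeta_pred]
      psi_zero_coeff_absorb[OF zeta_nonzero zeta_pred] by simp
qed

lemma relation3_scalar_pred:
  assumes "i = (l - 1) mod N" and "j = l mod N"
  shows "relation3_scalar (kp_coeff i) i j l \<and> relation3_scalar (km_coeff i) i j l"
proof -
  have v: "kp_coeff i t (l + 1) = (if t = 0 then 1 else 0)"
          "kp_coeff i t l = psi_inf_coeff (s l) (\<zeta> (l - 1)) t"
          "km_coeff i t (l + 1) = (if t = 0 then 1 else 0)"
          "km_coeff i t l = psi_zero_coeff (s l) (\<zeta> (l - 1)) t" for t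
    unfolding assms using N_ge_3 by (simp_all add: K_coeff_simps mod_N_simps mod_simps)
  have "Acart s N i j = - s l" and "Mmat s N i j = - s l"
    unfolding assms using N_ge_3
    by (simp_all add: Acart_def Mmat_def mod_N_simps mod_simps s_mod s_mod_add s_mod_diff)
  then show ?thesis unfolding relation3_scalar_def v
    using psi_inf_coeff_emit[OF zeta_nonzero zeta_succ]
      psi_zero_coeff_emit[OF zeta_nonzero zeta_succ] by simp
qed

lemma relation3_scalar_far:
  assumes "i mod N = i" and "j = l mod N"
    and "i \<noteq> l mod N" "i \<noteq> (l + 1) mod N" "i \<noteq> (l - 1) mod N"
    and "(i + 1) mod N \<noteq> l mod N" "(i - 1) mod N \<noteq> l mod N"
  shows "relation3_scalar (kp_coeff i) i j l \<and> relation3_scalar (km_coeff i) i j l"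
proof -
  have v: "kp_coeff i t (l + 1) = (if t = 0 then 1 else 0)" "kp_coeff i t l = (if t = 0 then 1 else 0)"
          "km_coeff i t (l + 1) = (if t = 0 then 1 else 0)" "km_coeff i t l = (if t = 0 then 1 else 0)" for t
    using N_ge_3 assms by (simp_all add: K_coeff_simps mod_N_simps mod_simps)
  have "Acart s N i j = 0" and "Mmat s N i j = 0"
    using N_ge_3 assms by (simp_all add: Acart_def Mmat_def mod_N_simps mod_simps)
  then show ?thesis unfolding relation3_scalar_def v by simp
qed

lemma K_coeff_exchange:
  assumes i: "0 \<le> i" "i < N" and j: "0 \<le> j" "j < N" and lj: "l mod N = j mod N"
  shows "d powi Mmat s N i j * kp_coeff i (r + 1) (l + 1) - q powi Acart s N i j * \<zeta> l * kp_coeff i r (l + 1)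
       = d powi Mmat s N i j * q powi Acart s N i j * kp_coeff i (r + 1) l - \<zeta> l * kp_coeff i r l"
      (is ?plus)
    and "d powi Mmat s N i j * km_coeff i (r + 1) (l + 1) - q powi Acart s N i j * \<zeta> l * km_coeff i r (l + 1)
       = d powi Mmat s N i j * q powi Acart s N i j * km_coeff i (r + 1) l - \<zeta> l * km_coeff i r l"
      (is ?minus)
proof -
  have jj: "j = l mod N" and im: "i mod N = i" using lj i j by simp_all
  have "relation3_scalar (kp_coeff i) i j l \<and> relation3_scalar (km_coeff i) i j l"
  proof (rule index_cases[OF i, of l])
    show "i = l mod N \<Longrightarrow> ?thesis" by (erule relation3_scalar_self[OF _ jj])
    show "i = (l + 1) mod N \<Longrightarrow> ?thesis" by (erule relation3_scalar_succ[OF _ jj])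
    show "i = (l - 1) mod N \<Longrightarrow> ?thesis" by (erule relation3_scalar_pred[OF _ jj])
  qed (rule relation3_scalar_far[OF im jj])
  then show "?plus" "?minus" unfolding relation3_scalar_def by blast+
qed

subsection \<open>Relations (1)--(5)\<close>

lemma KZp_apply: "KZp q K_op H_op i t v = (\<lambda>k. kp_coeff i t k * v k)"
  by (simp add: KZp_def Kplus_eq KpW_def kp_coeff_def fun_eq_iff)

lemma KZm_apply: "KZm q Kinv_op H_op i t v = (\<lambda>k. km_coeff i t k * v k)"
  by (simp add: KZm_def Kminus_eq KmW_def km_coeff_def fun_eq_iff)

lemma K_op_apply: "K_op i v = (\<lambda>k. kp_coeff i 0 k * v k)"
  and Kinv_op_apply: "Kinv_op i v = (\<lambda>k. km_coeff i 0 k * v k)"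
  by (simp_all add: K_op_def Kinv_op_def diag_def kp_coeff_def km_coeff_def)

lemma kp_coeff_0_km_coeff_0: "kp_coeff i 0 x * km_coeff i 0 x = 1"
  using kp_0_km_0 by (simp add: kp_coeff_def km_coeff_def)

lemma kp_coeff_0_succ:
  assumes "0 \<le> i" "i < N" "0 \<le> j" "j < N" and "l mod N = j mod N"
  shows "kp_coeff i 0 (l + 1) = q powi Acart s N i j * kp_coeff i 0 l"
  using K_coeff_exchange(1)[OF assms, of "-1"] d_nonzero by (simp add: kp_coeff_def)

lemma relation1_E:
  assumes i: "0 \<le> i" "i < N" and j: "0 \<le> j" "j < N"
  shows "K_op i (E j r (Kinv_op i v)) = vsc (q powi Acart s N i j) (E j r v)"
proof
  fix x
  show "K_op i (E j r (Kinv_op i v)) x = vsc (q powi Acart s N i j) (E j r v) x"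
  proof (cases "(x - 1) mod N = j mod N")
    case True
    then have x: "x = (x - 1) + 1" and "(x - 1) mod N = j mod N" by simp_all
    with kp_coeff_0_succ[OF i j this(2)] kp_coeff_0_km_coeff_0[of i "x - 1"] show ?thesis
      by (subst (1 2) x) (simp add: K_op_apply Kinv_op_apply Eop_def vsc_def algebra_simps)
  qed (simp add: K_op_apply Kinv_op_apply Eop_def vsc_def)
qed

lemma relation1_F:
  assumes i: "0 \<le> i" "i < N" and j: "0 \<le> j" "j < N"
  shows "K_op i (F j r (Kinv_op i v)) = vsc (q powi (- Acart s N i j)) (F j r v)"
proof
  fix x
  show "K_op i (F j r (Kinv_op i v)) x = vsc (q powi (- Acart s N i j)) (F j r v) x"
  proof (cases "x mod N = j mod N")
    case True
    have "q powi Acart s N i j * (kp_coeff i 0 x * km_coeff i 0 (x + 1)) = 1"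
      using kp_coeff_0_km_coeff_0[of i "x + 1"] kp_coeff_0_succ[OF i j True]
      by (simp add: algebra_simps)
    then have "kp_coeff i 0 x * km_coeff i 0 (x + 1) = q powi (- Acart s N i j)"
      using q_nonzero by (simp add: power_int_minus field_simps)
    with True show ?thesis
      by (simp add: K_op_apply Kinv_op_apply Fop_def vsc_def algebra_simps)
  qed (simp add: K_op_apply Kinv_op_apply Fop_def vsc_def)
qed

lemma relation3_E:
  assumes i: "0 \<le> i" "i < N" and j: "0 \<le> j" "j < N"
    and KZ: "KZ \<in> {KZp q K_op H_op, KZm q Kinv_op H_op}"
  shows "vsc (d powi Mmat s N i j) (KZ i (r + 1) (E j k v)) - vsc (q powi Acart s N i j) (KZ i r (E j (k + 1) v))
       = vsc (d powi Mmat s N i j * q powi Acart s N i j) (E j k (KZ i (r + 1) v)) - E j (k + 1) (KZ i r v)"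
proof
  fix x
  show "(vsc (d powi Mmat s N i j) (KZ i (r + 1) (E j k v)) - vsc (q powi Acart s N i j) (KZ i r (E j (k + 1) v))) x
      = (vsc (d powi Mmat s N i j * q powi Acart s N i j) (E j k (KZ i (r + 1) v)) - E j (k + 1) (KZ i r v)) x"
  proof (cases "(x - 1) mod N = j mod N")
    case False
    then show ?thesis using KZ by (auto simp: KZp_apply KZm_apply Eop_def vsc_def)
  next
    case True
    define l where "l = x - 1"
    have x: "x = l + 1" and lj: "l mod N = j mod N" using True by (simp_all add: l_def)
    have pw: "\<zeta> l powi (k + 1) = \<zeta> l * \<zeta> l powi k" "\<zeta> l powi (1 + k) = \<zeta> l * \<zeta> l powi k"
      using zeta_nonzero by (simp_all add: power_int_add)
    note exch = K_coeff_exchange[OF i j lj, of r, THEN arg_cong, of "\<lambda>z. z * (\<zeta> l powi k * v l)"]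
    from KZ exch lj show ?thesis
      unfolding x by (auto simp: KZp_apply KZm_apply Eop_def vsc_def pw algebra_simps)
  qed
qed

lemma relation3_F:
  assumes i: "0 \<le> i" "i < N" and j: "0 \<le> j" "j < N"
    and KZ: "KZ \<in> {KZp q K_op H_op, KZm q Kinv_op H_op}"
  shows "vsc (d powi Mmat s N i j) (KZ i (r + 1) (F j k v)) - vsc (q powi (- Acart s N i j)) (KZ i r (F j (k + 1) v))
       = vsc (d powi Mmat s N i j * q powi (- Acart s N i j)) (F j k (KZ i (r + 1) v)) - F j (k + 1) (KZ i r v)"
proof
  fix x
  show "(vsc (d powi Mmat s N i j) (KZ i (r + 1) (F j k v)) - vsc (q powi (- Acart s N i j)) (KZ i r (F j (k + 1) v))) x
      = (vsc (d powi Mmat s N i j * q powi (- Acart s N i j)) (F j k (KZ i (r + 1) v)) - F j (k + 1) (KZ i r v)) x"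
  proof (cases "x mod N = j mod N")
    case False
    then show ?thesis using KZ by (auto simp: KZp_apply KZm_apply Fop_def vsc_def)
  next
    case True
    have pw: "\<zeta> x powi (k + 1) = \<zeta> x * \<zeta> x powi k" "\<zeta> x powi (1 + k) = \<zeta> x * \<zeta> x powi k"
      using zeta_nonzero by (simp_all add: power_int_add)
    have inv: "q powi Acart s N i j * q powi (- Acart s N i j) = 1"
      using q_nonzero by (simp add: power_int_minus)
    note exch = K_coeff_exchange[OF i j True, of r, THEN exchange_relation_inverse[OF inv],
        THEN arg_cong, of "\<lambda>z. z * (of_int (s (x + 1)) * \<zeta> x powi k * v (x + 1))"]
    from KZ exch True show ?thesis
      by (auto simp: KZp_apply KZm_apply Fop_def vsc_def pw algebra_simps)
  qed
qed

lemma psi_inf_coeff_minus_psi_zero_coeff: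
  assumes "\<sigma> = 1 \<or> \<sigma> = -1" and "a \<noteq> 0"
  shows "psi_inf_coeff \<sigma> a t - psi_zero_coeff \<sigma> a t = of_int \<sigma> * (q - inverse q) * a powi t"
  using assms q_nonzero by (auto simp: psi_inf_coeff_def psi_zero_coeff_def power_int_minus field_simps)

lemma deg_sign: "(-1::complex) powi (deg s x * deg s x) * of_int (s (x + 1)) = of_int (s x)"
  using s_cases[of x] s_cases[of "x + 1"] by (auto simp: deg_def)

lemma E_F_commutator:
  "E i a (F i b v) - vsc ((-1) powi (deg s i * deg s i)) (F i b (E i a v))
     = (\<lambda>x. (kp_coeff i (a + b) x - km_coeff i (a + b) x) / (q - inverse q) * v x)"
proof
  fix x
  have pw: "\<zeta> y powi a * \<zeta> y powi b = \<zeta> y powi (a + b)" for y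
    using zeta_nonzero by (simp add: power_int_add)
  consider (self) "x mod N = i mod N" | (succ) "(x - 1) mod N = i mod N" "x mod N \<noteq> i mod N"
    | (other) "x mod N \<noteq> i mod N" "(x - 1) mod N \<noteq> i mod N" by blast
  then show "(E i a (F i b v) - vsc ((-1) powi (deg s i * deg s i)) (F i b (E i a v))) x
     = (kp_coeff i (a + b) x - km_coeff i (a + b) x) / (q - inverse q) * v x"
  proof cases
    case self
    have n1: "(x - 1) mod N \<noteq> i mod N" using self pred_mod_ne[of x] by simp
    have deg: "deg s i = deg s x" using deg_cong[OF self] by simp
    have diff: "psi_inf_coeff (- s x) (\<zeta> x) (a + b) - psi_zero_coeff (- s x) (\<zeta> x) (a + b)
        = of_int (- s x) * (q - inverse q) * \<zeta> x powi (a + b)"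
      using s_cases[of x] zeta_nonzero by (intro psi_inf_coeff_minus_psi_zero_coeff) auto
    have "(E i a (F i b v) - vsc ((-1) powi (deg s i * deg s i)) (F i b (E i a v))) x
        = - ((-1) powi (deg s x * deg s x) * of_int (s (x + 1))) * \<zeta> x powi (a + b) * v x"
      using self n1 by (simp add: Eop_def Fop_def vsc_def deg pw[symmetric] algebra_simps)
    also have "\<dots> = (kp_coeff i (a + b) x - km_coeff i (a + b) x) / (q - inverse q) * v x"
      using self diff q_minus_inverse_nonzero deg_sign[of x] by (simp add: K_coeff_simps)
    finally show ?thesis .
  next
    case succ
    have diff: "psi_inf_coeff (s x) (\<zeta> (x - 1)) (a + b) - psi_zero_coeff (s x) (\<zeta> (x - 1)) (a + b)
        = of_int (s x) * (q - inverse q) * \<zeta> (x - 1) powi (a + b)"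
      using s_cases[of x] zeta_nonzero by (intro psi_inf_coeff_minus_psi_zero_coeff) auto
    have "(E i a (F i b v) - vsc ((-1) powi (deg s i * deg s i)) (F i b (E i a v))) x
        = of_int (s x) * \<zeta> (x - 1) powi (a + b) * v x"
      using succ by (simp add: Eop_def Fop_def vsc_def pw[symmetric] algebra_simps)
    also have "\<dots> = (kp_coeff i (a + b) x - km_coeff i (a + b) x) / (q - inverse q) * v x"
      using succ diff q_minus_inverse_nonzero by (simp add: K_coeff_simps)
    finally show ?thesis .
  next
    case other
    then show ?thesis by (simp add: Eop_def Fop_def vsc_def K_coeff_simps)
  qed
qed

lemma relation4:
  assumes "0 \<le> i" "i < N" "0 \<le> j" "j < N"
  shows "E i a (F j b v) - vsc ((-1) powi (deg s i * deg s j)) (F j b (E i a v))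
      = (if i = j then vsc (1 / (q - inverse q)) (KZp q K_op H_op i (a + b) v - KZm q Kinv_op H_op i (a + b) v)
         else 0)"
proof (cases "i = j")
  case True
  then show ?thesis unfolding True E_F_commutator
    by (simp add: KZp_apply KZm_apply vsc_def fun_eq_iff diff_divide_distrib algebra_simps)
next
  case False
  with assms have "i mod N \<noteq> j mod N" by simp
  with False show ?thesis by (auto simp: Eop_def Fop_def vsc_def)
qed

lemma relation5_commute:
  assumes i: "0 \<le> i" "i < N" and j: "0 \<le> j" "j < N" and A: "Acart s N i j = 0"
  shows "E i a (E j b v) - vsc c (E j b (E i a v)) = 0"
    and "F i a (F j b v) - vsc c (F j b (F i a v)) = 0"
proof -
  have "i mod N \<noteq> (j + 1) mod N" using Acart_Mmat_succ(1)[OF i] A s_cases[of "j + 1"] by force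
  moreover have "j mod N \<noteq> (i + 1) mod N" using Acart_Mmat_pred(1)[OF j] A s_cases[of "i + 1"] by force
  ultimately show "E i a (E j b v) - vsc c (E j b (E i a v)) = 0"
    and "F i a (F j b v) - vsc c (F j b (F i a v)) = 0"
    by (simp_all add: E_E_vanish F_F_vanish mod_pred_eq_iff vsc_zero)
qed

lemma E_E_exchange_succ:
  assumes i: "0 \<le> i" "i < N" and ij: "i mod N = (j + 1) mod N"
  shows "vsc (d powi Mmat s N i j) (E i (a + 1) (E j b v)) - vsc (q powi Acart s N i j) (E i a (E j (b + 1) v)) = 0"
proof
  fix x
  show "(vsc (d powi Mmat s N i j) (E i (a + 1) (E j b v)) - vsc (q powi Acart s N i j) (E i a (E j (b + 1) v))) x = 0 x"
  proof (cases "(x - 1) mod N = i mod N \<and> (x - 2) mod N = j mod N")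
    case True
    define l where "l = x - 2"
    have x: "x - 1 = l + 1" "x - 2 = l" by (simp_all add: l_def)
    have "s (j + 1) = s (l + 1)" using True by (metis l_def s_cong mod_add_left_eq)
    then have A: "Acart s N i j = - s (l + 1)" and M: "Mmat s N i j = s (l + 1)"
      using Acart_Mmat_succ[OF i ij] by simp_all
    have rel: "d powi s (l + 1) * \<zeta> (l + 1) = q powi (- s (l + 1)) * \<zeta> l"
      using zeta_pred[of l] q_nonzero by (simp add: power_int_minus field_simps)
    have "(vsc (d powi Mmat s N i j) (E i (a + 1) (E j b v)) - vsc (q powi Acart s N i j) (E i a (E j (b + 1) v))) x
        = \<zeta> (l + 1) powi a * \<zeta> l powi b * v l * (d powi s (l + 1) * \<zeta> (l + 1) - q powi (- s (l + 1)) * \<zeta> l)"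
      using True zeta_nonzero by (simp add: E_E_apply vsc_def A M x power_int_add algebra_simps)
    then show ?thesis by (simp add: rel)
  qed (auto simp: E_E_apply vsc_def)
qed

lemma E_E_exchange_pred:
  assumes j: "0 \<le> j" "j < N" and ji: "j mod N = (i + 1) mod N"
  shows "vsc (d powi Mmat s N i j * q powi Acart s N i j) (E j b (E i (a + 1) v)) - E j (b + 1) (E i a v) = 0"
proof
  fix x
  show "(vsc (d powi Mmat s N i j * q powi Acart s N i j) (E j b (E i (a + 1) v)) - E j (b + 1) (E i a v)) x = 0 x"
  proof (cases "(x - 1) mod N = j mod N \<and> (x - 2) mod N = i mod N")
    case True
    define l where "l = x - 2"
    have x: "x - 1 = l + 1" "x - 2 = l" by (simp_all add: l_def)
    have "s (i + 1) = s (l + 1)" using True by (metis l_def s_cong mod_add_left_eq)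
    then have A: "Acart s N i j = - s (l + 1)" and M: "Mmat s N i j = - s (l + 1)"
      using Acart_Mmat_pred[OF j ji] by simp_all
    have rel: "d powi (- s (l + 1)) * q powi (- s (l + 1)) * \<zeta> l = \<zeta> (l + 1)"
      using zeta_pred[of l] d_nonzero q_nonzero by (simp add: power_int_minus field_simps)
    have "(vsc (d powi Mmat s N i j * q powi Acart s N i j) (E j b (E i (a + 1) v)) - E j (b + 1) (E i a v)) x
        = \<zeta> (l + 1) powi b * \<zeta> l powi a * v l * (d powi (- s (l + 1)) * q powi (- s (l + 1)) * \<zeta> l - \<zeta> (l + 1))"
      using True zeta_nonzero by (simp add: E_E_apply vsc_def A M x power_int_add algebra_simps)
    then show ?thesis by (simp add: rel)
  qed (auto simp: E_E_apply vsc_def)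
qed

lemma relation5_E:
  assumes "0 \<le> i" "i < N" "0 \<le> j" "j < N"
  shows "vsc (d powi Mmat s N i j) (E i (a + 1) (E j b v)) - vsc (q powi Acart s N i j) (E i a (E j (b + 1) v))
       = vsc c (vsc (d powi Mmat s N i j * q powi Acart s N i j) (E j b (E i (a + 1) v)) - E j (b + 1) (E i a v))"
proof -
  consider "i mod N = (j + 1) mod N" | "j mod N = (i + 1) mod N"
    | "i mod N \<noteq> (j + 1) mod N" "j mod N \<noteq> (i + 1) mod N" by blast
  then show ?thesis
  proof cases
    case 1
    with not_mutually_succ[of i j] show ?thesis
      by (simp add: E_E_exchange_succ[OF assms(1,2) 1] E_E_vanish vsc_zero)
  next
    case 2
    with not_mutually_succ[of j i] show ?thesis
      by (simp add: E_E_exchange_pred[OF assms(3,4) 2] E_E_vanish vsc_zero)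
  qed (simp add: E_E_vanish vsc_zero)
qed

lemma F_F_exchange_pred:
  assumes j: "0 \<le> j" "j < N" and ji: "j mod N = (i + 1) mod N"
  shows "vsc (d powi Mmat s N i j) (F i (a + 1) (F j b v)) - vsc (q powi (- Acart s N i j)) (F i a (F j (b + 1) v)) = 0"
proof
  fix x
  show "(vsc (d powi Mmat s N i j) (F i (a + 1) (F j b v)) - vsc (q powi (- Acart s N i j)) (F i a (F j (b + 1) v))) x = 0 x"
  proof (cases "x mod N = i mod N \<and> (x + 1) mod N = j mod N")
    case True
    have "s (i + 1) = s (x + 1)" using True by (metis s_cong mod_add_left_eq)
    then have A: "Acart s N i j = - s (x + 1)" and M: "Mmat s N i j = - s (x + 1)"
      using Acart_Mmat_pred[OF j ji] by simp_all
    have rel: "d powi (- s (x + 1)) * \<zeta> x = q powi (s (x + 1)) * \<zeta> (x + 1)"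
      using zeta_pred[of x] d_nonzero by (simp add: power_int_minus field_simps)
    have "(vsc (d powi Mmat s N i j) (F i (a + 1) (F j b v)) - vsc (q powi (- Acart s N i j)) (F i a (F j (b + 1) v))) x
        = of_int (s (x + 1)) * \<zeta> x powi a * of_int (s (x + 1 + 1)) * \<zeta> (x + 1) powi b * v (x + 1 + 1)
          * (d powi (- s (x + 1)) * \<zeta> x - q powi (s (x + 1)) * \<zeta> (x + 1))"
      using True zeta_nonzero by (simp add: F_F_apply vsc_def A M power_int_add algebra_simps)
    then show ?thesis by (simp add: rel)
  qed (auto simp: F_F_apply vsc_def)
qed

lemma F_F_exchange_succ:
  assumes i: "0 \<le> i" "i < N" and ij: "i mod N = (j + 1) mod N"
  shows "vsc (d powi Mmat s N i j * q powi (- Acart s N i j)) (F j b (F i (a + 1) v)) - F j (b + 1) (F i a v) = 0"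
proof
  fix x
  show "(vsc (d powi Mmat s N i j * q powi (- Acart s N i j)) (F j b (F i (a + 1) v)) - F j (b + 1) (F i a v)) x = 0 x"
  proof (cases "x mod N = j mod N \<and> (x + 1) mod N = i mod N")
    case True
    have "s (j + 1) = s (x + 1)" using True by (metis s_cong mod_add_left_eq)
    then have A: "Acart s N i j = - s (x + 1)" and M: "Mmat s N i j = s (x + 1)"
      using Acart_Mmat_succ[OF i ij] by simp_all
    have "(vsc (d powi Mmat s N i j * q powi (- Acart s N i j)) (F j b (F i (a + 1) v)) - F j (b + 1) (F i a v)) x
        = of_int (s (x + 1)) * \<zeta> x powi b * of_int (s (x + 1 + 1)) * \<zeta> (x + 1) powi a * v (x + 1 + 1)
          * (d powi s (x + 1) * q powi s (x + 1) * \<zeta> (x + 1) - \<zeta> x)"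
      using True zeta_nonzero by (simp add: F_F_apply vsc_def A M power_int_add algebra_simps)
    then show ?thesis by (simp flip: zeta_pred)
  qed (auto simp: F_F_apply vsc_def)
qed

lemma relation5_F:
  assumes "0 \<le> i" "i < N" "0 \<le> j" "j < N"
  shows "vsc (d powi Mmat s N i j) (F i (a + 1) (F j b v)) - vsc (q powi (- Acart s N i j)) (F i a (F j (b + 1) v))
       = vsc c (vsc (d powi Mmat s N i j * q powi (- Acart s N i j)) (F j b (F i (a + 1) v)) - F j (b + 1) (F i a v))"
proof -
  consider "j mod N = (i + 1) mod N" | "i mod N = (j + 1) mod N"
    | "i mod N \<noteq> (j + 1) mod N" "j mod N \<noteq> (i + 1) mod N" by blast
  then show ?thesis
  proof cases
    case 1
    then have "j mod N \<noteq> (i - 1) mod N"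
      using not_mutually_succ[of j i] mod_pred_eq_iff[of j i] by blast
    then show ?thesis
      by (simp add: F_F_exchange_pred[OF assms(3,4) 1] F_F_vanish vsc_zero)
  next
    case 2
    then have "i mod N \<noteq> (j - 1) mod N"
      using not_mutually_succ[of i j] mod_pred_eq_iff[of i j] by blast
    then show ?thesis
      by (simp add: F_F_exchange_succ[OF assms(1,2) 2] F_F_vanish vsc_zero)
  qed (simp add: F_F_vanish mod_pred_eq_iff vsc_zero)
qed

subsection \<open>Serre relations\<close>

abbreviation br :: "gen \<Rightarrow> gen \<Rightarrow> gen" where "br \<equiv> qbr s N q"
abbreviation genE :: "int \<Rightarrow> int \<Rightarrow> gen" where "genE i r \<equiv> (E i r, unitw N i, deg s i)"
abbreviation genF :: "int \<Rightarrow> int \<Rightarrow> gen" where "genF i r \<equiv> (F i r, - unitw N i, deg s i)"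

lemma wpair_add_left: "wpair s N (\<alpha> + \<beta>) \<gamma> = wpair s N \<alpha> \<gamma> + wpair s N \<beta> \<gamma>"
  and wpair_add_right: "wpair s N \<gamma> (\<alpha> + \<beta>) = wpair s N \<gamma> \<alpha> + wpair s N \<gamma> \<beta>"
  and wpair_diff_left: "wpair s N (\<alpha> - \<beta>) \<gamma> = wpair s N \<alpha> \<gamma> - wpair s N \<beta> \<gamma>"
  and wpair_diff_right: "wpair s N \<gamma> (\<alpha> - \<beta>) = wpair s N \<gamma> \<alpha> - wpair s N \<gamma> \<beta>"
  and wpair_uminus_left: "wpair s N (- \<alpha>) \<gamma> = - wpair s N \<alpha> \<gamma>"
  and wpair_uminus_right: "wpair s N \<gamma> (- \<alpha>) = - wpair s N \<gamma> \<alpha>"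
  and wpair_numeral_left: "wpair s N (numeral w * \<alpha>) \<gamma> = numeral w * wpair s N \<alpha> \<gamma>"
  and wpair_numeral_right: "wpair s N \<gamma> (numeral w * \<alpha>) = numeral w * wpair s N \<gamma> \<alpha>"
  by (simp_all add: wpair_def algebra_simps sum.distrib sum_subtractf sum_negf sum_distrib_left)

lemma wpair_sym: "wpair s N \<alpha> \<beta> = wpair s N \<beta> \<alpha>"
  unfolding wpair_def by (subst sum.swap) (simp add: Acart_sym algebra_simps)

lemmas wpair_simps = wpair_add_left wpair_add_right wpair_diff_left wpair_diff_right
  wpair_uminus_left wpair_uminus_right wpair_numeral_left wpair_numeral_right

lemma sign_q_power_mult_eq:
  assumes "W1 + W2 = W3 + W4" and "P1 + P2 = P3 + P4"
  shows "((-1::complex) powi P1 * q powi W1) * ((-1) powi P2 * q powi W2)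
       = ((-1) powi P3 * q powi W3) * ((-1) powi P4 * q powi W4)"
proof -
  have "((-1::complex) powi P1 * q powi W1) * ((-1) powi P2 * q powi W2) = (-1) powi (P1 + P2) * q powi (W1 + W2)"
    using q_nonzero by (simp add: power_int_add)
  also have "\<dots> = ((-1) powi P3 * q powi W3) * ((-1) powi P4 * q powi W4)"
    using assms q_nonzero by (simp add: power_int_add)
  finally show ?thesis .
qed

lemma serre_cubic_E:
  assumes "e = 1 \<or> e = -1"
  shows "fst (br (genE i a1) (br (genE i a2) (genE ((i + e) mod N) b))) v = 0"
  using assms N_ge_3 by (auto simp: qbr_def linear_simps E_E_vanish mod_N_simps mod_simps)

lemma serre_cubic_F:
  assumes "e = 1 \<or> e = -1"
  shows "fst (br (genF i a1) (br (genF i a2) (genF ((i + e) mod N) b))) v = 0"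
  using assms N_ge_3 by (auto simp: qbr_def linear_simps F_F_vanish mod_N_simps mod_simps)

lemma serre_quartic_E:
  assumes "N \<ge> 4"
  shows "fst (br (genE i a1) (br (genE ((i + 1) mod N) b1) (br (genE i a2) (genE ((i - 1) mod N) b2)))) v = 0"
  using assms by (simp add: qbr_def linear_simps E_E_vanish mod_N_simps mod_simps)

lemma serre_quartic_F:
  assumes "N \<ge> 4"
  shows "fst (br (genF i a1) (br (genF ((i + 1) mod N) b1) (br (genF i a2) (genF ((i - 1) mod N) b2)))) v = 0"
  using assms by (simp add: qbr_def linear_simps F_F_vanish mod_N_simps mod_simps)

text \<open>For \<open>N = 3\<close> both sides of the quintic relation reduce to the single surviving
  product \<open>E\<^sub>i\<^sub>-\<^sub>1E\<^sub>i\<^sub>+\<^sub>1E\<^sub>i\<^sub>-\<^sub>1E\<^sub>i\<^sub>+\<^sub>1E\<^sub>i\<close> (resp. its \<open>F\<close>-analogue) with the same sign and power of \<open>q\<close>,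
  because \<open>\<langle>,\<rangle>\<close> is symmetric.\<close>

lemma serre_quintic_E:
  assumes "N = 3"
  shows "fst (br (genE ((i - 1) mod N) a1) (br (genE ((i + 1) mod N) b1)
           (br (genE ((i - 1) mod N) a2) (br (genE ((i + 1) mod N) b2) (genE i c))))) v
       = fst (br (genE ((i + 1) mod N) b1) (br (genE ((i - 1) mod N) a1)
           (br (genE ((i + 1) mod N) b2) (br (genE ((i - 1) mod N) a2) (genE i c))))) v"
proof -
  have "N dvd 3" "\<not> N dvd 4" "\<not> N dvd 5" "N dvd 6" "\<not> N dvd 2" "\<not> N dvd 1"
    using assms by auto
  then show ?thesis
    apply (simp add: qbr_def linear_simps E_E_vanish mod_N_simps mod_simps wpair_simps)
    apply (rule arg_cong[where f = "\<lambda>c. vsc c _"])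
    apply (rule sign_q_power_mult_eq)
    subgoal using wpair_sym[of "unitw N ((i - 1) mod N)" "unitw N ((1 + i) mod N)"] by (simp add: algebra_simps)
    subgoal by (simp add: algebra_simps)
    done
qed

lemma serre_quintic_F:
  assumes "N = 3"
  shows "fst (br (genF ((i - 1) mod N) a1) (br (genF ((i + 1) mod N) b1)
           (br (genF ((i - 1) mod N) a2) (br (genF ((i + 1) mod N) b2) (genF i c))))) v
       = fst (br (genF ((i + 1) mod N) b1) (br (genF ((i - 1) mod N) a1)
           (br (genF ((i + 1) mod N) b2) (br (genF ((i - 1) mod N) a2) (genF i c))))) v"
proof -
  have "N dvd 3" "\<not> N dvd 4" "\<not> N dvd 5" "N dvd 6" "\<not> N dvd 2" "\<not> N dvd 1"
    using assms by auto
  then show ?thesis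
    apply (simp add: qbr_def linear_simps F_F_vanish mod_N_simps mod_simps wpair_simps)
    apply (rule arg_cong[where f = "\<lambda>c. vsc c _"])
    apply (rule sign_q_power_mult_eq)
    subgoal using wpair_sym[of "unitw N ((i - 1) mod N)" "unitw N ((i + 1) mod N)"] by linarith
    subgoal by (simp add: algebra_simps)
    done
qed

lemma mn_eq_2_imp_N_eq_3:
  assumes "m * n = 2"
  shows "N = 3"
proof -
  have "m dvd 2" using assms by (metis dvd_triv_left)
  then have "m \<le> 2" by (rule dvd_imp_le) simp
  moreover have "m \<noteq> 0" using assms by (intro notI) simp
  ultimately have "m = 1 \<or> m = 2" by linarith
  with assms show ?thesis by (auto simp: N_def)
qed

lemma Acart_diag_zero_imp_N_ge_4:
  assumes "m * n \<noteq> 2" and "Acart s N i i = 0"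
  shows "N \<ge> 4"
proof (rule ccontr)
  assume "\<not> N \<ge> 4"
  then have N: "N = 3" and mn: "m + n = 3" using N_ge_3 N_def by auto
  let ?S = "{k \<in> {0..<N}. s k = 1}"
  have opposite: "s (i mod N) = - s ((i + 1) mod N)"
    using assms(2) by (simp add: Acart_diag s_mod)
  have range: "i mod N \<in> {0..<N}" "(i + 1) mod N \<in> {0..<N}" using N_pos by auto
  have "i mod N \<in> ?S \<or> (i + 1) mod N \<in> ?S" and "i mod N \<notin> ?S \<or> (i + 1) mod N \<notin> ?S"
    using opposite range s_cases[of "i mod N"] by auto
  then have "?S \<noteq> {}" and "?S \<noteq> {0..<N}" using range by blast+
  moreover have "finite ?S" by (rule finite_subset[of _ "{0..<N}"]) auto
  ultimately have "m \<noteq> 0" using card_positive_parities by auto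
  have "m \<noteq> 3"
    using \<open>?S \<noteq> {0..<N}\<close> card_positive_parities card_subset_eq[of "{0..<N}" ?S] N by fastforce
  with \<open>m \<noteq> 0\<close> mn have "m = 1 \<and> n = 2 \<or> m = 2 \<and> n = 1" by linarith
  with assms(1) show False by auto
qed

lemma Es_module: "Es_module m n s d q E F K_op Kinv_op H_op"
  unfolding Es_module_def Let_def N_def[symmetric]
  apply (intro conjI ballI allI impI)
  subgoal by (rule lin_on_E)
  subgoal by (rule lin_on_F)
  subgoal by (rule has_parity_E)
  subgoal by (rule has_parity_F)
  subgoal by (simp add: K_op_def lin_on_diag)
  subgoal by (simp add: Kinv_op_def lin_on_diag)
  subgoal by (simp add: K_op_def has_parity_diag)
  subgoal by (simp add: Kinv_op_def has_parity_diag)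
  subgoal by (simp add: H_op_def lin_on_diag)
  subgoal by (simp add: H_op_def has_parity_diag)
  subgoal using kp_0_km_0 by (simp add: K_op_def Kinv_op_def diag_def fun_eq_iff mult.assoc[symmetric])
  subgoal using km_0_kp_0 by (simp add: K_op_def Kinv_op_def diag_def fun_eq_iff mult.assoc[symmetric])
  subgoal by (simp add: K_op_def diag_def fun_eq_iff)
  subgoal by (rule relation1_E) auto
  subgoal by (rule relation1_F) auto
  subgoal by (simp add: Kplus_eq KpW_def fun_eq_iff)
  subgoal by (simp add: Kminus_eq KmW_def fun_eq_iff)
  subgoal by (simp add: Kplus_eq Kminus_eq KpW_def KmW_def fun_eq_iff)
  subgoal by (rule relation3_E) auto
  subgoal by (rule relation3_F) auto
  subgoal by (rule relation4) auto
  subgoal by (rule relation5_commute) auto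
  subgoal by (rule relation5_commute) auto
  subgoal by (rule relation5_E) auto
  subgoal by (rule relation5_F) auto
  subgoal for g i v e using serre_cubic_E[of e i] serre_cubic_F[of e i] by auto
  subgoal using Acart_diag_zero_imp_N_ge_4 serre_quartic_E serre_quartic_F by auto
  subgoal for g i using mn_eq_2_imp_N_eq_3 serre_quintic_E[of i] serre_quintic_F[of i] by auto
  done

subsection \<open>Level zero and tameness\<close>

lemma foldr_K_op: "foldr (\<lambda>i T. K_op i \<circ> T) xs id v = (\<lambda>j. (\<Prod>i\<leftarrow>xs. kp i 0 j) * v j)"
  by (induction xs) (auto simp: K_op_def diag_def fun_eq_iff)

lemma prod_kp_0: "(\<Prod>i\<leftarrow>[0..N - 1]. kp i 0 j) = 1"
proof -
  let ?a = "j mod N" and ?b = "(j - 1) mod N"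
  have ab: "?a \<noteq> ?b" using pred_mod_ne[of j] by simp
  have "(\<Prod>i\<leftarrow>[0..N - 1]. kp i 0 j) = (\<Prod>i\<in>{0..N - 1}. kp i 0 j)"
    by (subst prod.distinct_set_conv_list[symmetric]) auto
  also have "\<dots> = (\<Prod>i\<in>{0..N - 1}. (if i = ?a then q powi (- s j) else 1) * (if i = ?b then q powi (s j) else 1))"
  proof (rule prod.cong[OF refl])
    fix i assume "i \<in> {0..N - 1}"
    then have "i mod N = i" by simp
    with ab show "kp i 0 j = (if i = ?a then q powi (- s j) else 1) * (if i = ?b then q powi (s j) else 1)"
      by (auto simp: kp_0)
  qed
  also have "\<dots> = q powi (- s j) * q powi (s j)"
    using N_pos by (simp add: prod.distrib)
  also have "\<dots> = 1" using q_nonzero by (simp add: power_int_minus)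
  finally show ?thesis .
qed

lemma level_zero: "level_zero N K_op"
  unfolding level_zero_def foldr_K_op by (simp add: prod_kp_0)

text \<open>The joint eigenvalues separate the basis vectors: in the residue class of \<open>j\<close> the
  coefficient of \<open>z\<^sup>-\<^sup>1\<close> of \<open>K\<^sub>j\<^sup>+(z)\<close> determines \<open>\<zeta>\<^sub>j\<close>, and across classes the constant terms
  differ.\<close>

lemma kp_separates_within_class:
  assumes "k mod N = j mod N" and "kp (j mod N) 1 k = kp (j mod N) 1 j"
  shows "k = j"
proof -
  have "(q powi (- s j) - q powi (s j)) * \<zeta> k = (q powi (- s j) - q powi (s j)) * \<zeta> j"
    using assms s_cong[OF assms(1)] by (simp add: kp_eig_def psi_inf_explicit)
  then have "\<zeta> k = \<zeta> j" using q_powi_s_ne[of j] by simp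
  with assms(1) show ?thesis by (rule zeta_inj_on_class)
qed

lemma kp_0_separates_classes:
  assumes "k mod N \<noteq> j mod N"
  shows "kp (j mod N) 0 k \<noteq> kp (j mod N) 0 j \<or> kp ((j - 1) mod N) 0 k \<noteq> kp ((j - 1) mod N) 0 j"
proof (cases "(k - 1) mod N = j mod N")
  case True
  have "k mod N \<noteq> (j - 1) mod N"
  proof
    assume "k mod N = (j - 1) mod N"
    moreover have "(k - 1 + 1) mod N = (j + 1) mod N" using True by (metis mod_add_left_eq)
    ultimately have "(j - 1) mod N = (j + 1) mod N" by simp
    then show False using N_ge_3 by (simp add: mod_N_simps)
  qed
  moreover have "(k - 1) mod N \<noteq> (j - 1) mod N"
    using assms by (metis diff_add_cancel mod_add_left_eq)
  ultimately show ?thesis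
    using pred_mod_ne[of j] q_powi_s_ne_1[of j] by (simp add: kp_0)
next
  case False
  with assms show ?thesis using q_powi_s_ne_1[of j] by (simp add: kp_0)
qed

lemma kp_separates:
  assumes "\<forall>i\<in>{0..<N}. \<forall>r. kp i r k = kp i r j"
  shows "k = j"
proof -
  have "j mod N \<in> {0..<N}" and "(j - 1) mod N \<in> {0..<N}" using N_pos by auto
  with assms kp_0_separates_classes kp_separates_within_class show ?thesis by blast
qed

lemma KpW_basisv: "KpW s N d q u i r (basisv j) = vsc (kp i r j) (basisv j)"
  and KmW_basisv: "KmW s N d q u i r (basisv j) = vsc (km i r j) (basisv j)"
  by (auto simp: KpW_def KmW_def vsc_def basisv_def fun_eq_iff)

lemma joint_eigenvalue_at_support:
  assumes "\<forall>i\<in>{0..<N}. \<forall>r. KpW s N d q u i r v = vsc (lp i r) v" and "v x \<noteq> 0" and "i \<in> {0..<N}"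
  shows "lp i r = kp i r x"
proof -
  have "KpW s N d q u i r v x = vsc (lp i r) v x" using assms(1,3) by simp
  with assms(2) show ?thesis by (simp add: KpW_def vsc_def)
qed

lemma tame: "tame_module N (Kplus q K_op H_op) (Kminus q Kinv_op H_op)"
  unfolding tame_module_def Kplus_eq Kminus_eq
proof (intro conjI allI ballI impI)
  show "\<exists>B. B \<subseteq> Wspace \<and> \<not> module.dependent vsc B \<and> module.span vsc B = Wspace
      \<and> (\<forall>b\<in>B. b \<noteq> 0 \<and> (\<forall>i\<in>{0..<N}. \<forall>r. (\<exists>c. KpW s N d q u i r b = vsc c b) \<and> (\<exists>c. KmW s N d q u i r b = vsc c b)))"
    using basisv_in_Wspace independent_basisv span_basisv basisv_nonzero KpW_basisv KmW_basisv
    by (intro exI[of _ "range basisv"]) auto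
next
  fix lp lm v w
  assume "(\<forall>i\<in>{0..<N}. \<forall>r. KpW s N d q u i r v = vsc (lp i r) v \<and> KmW s N d q u i r v = vsc (lm i r) v
        \<and> KpW s N d q u i r w = vsc (lp i r) w \<and> KmW s N d q u i r w = vsc (lm i r) w) \<and> v \<noteq> 0"
  then have ev: "\<forall>i\<in>{0..<N}. \<forall>r. KpW s N d q u i r v = vsc (lp i r) v"
    "\<forall>i\<in>{0..<N}. \<forall>r. KpW s N d q u i r w = vsc (lp i r) w" and "v \<noteq> 0" by auto
  then obtain j where j: "v j \<noteq> 0" by (auto simp: fun_eq_iff)
  have supp: "x = j" if "v x \<noteq> 0 \<or> w x \<noteq> 0" for x
  proof (rule kp_separates, intro ballI allI)
    fix i r assume i: "i \<in> {0..<N}"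
    from that have "lp i r = kp i r x"
      by (elim disjE) (erule joint_eigenvalue_at_support[OF ev(1) _ i],
          erule joint_eigenvalue_at_support[OF ev(2) _ i])
    moreover have "lp i r = kp i r j"
      by (rule joint_eigenvalue_at_support[OF ev(1) j i])
    ultimately show "kp i r x = kp i r j" by (simp only:)
  qed
  show "\<exists>c. w = vsc c v"
  proof (intro exI[of _ "w j / v j"] ext)
    fix x
    show "w x = vsc (w j / v j) v x"
    proof (cases "x = j")
      case False
      then have "v x = 0" "w x = 0" using supp by auto
      then show ?thesis by (simp add: vsc_def)
    qed (use j in \<open>simp add: vsc_def\<close>)
  qed
qed

subsection \<open>Irreducibility\<close>

definition EF_stable :: "wvec set \<Rightarrow> bool" where
  "EF_stable U \<longleftrightarrow> U \<subseteq> Wspace \<and> 0 \<in> U \<and> (\<forall>v\<in>U. \<forall>w\<in>U. v + w \<in> U) \<and> (\<forall>c. \<forall>v\<in>U. vsc c v \<in> U)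
     \<and> (\<forall>i\<in>{0..<N}. \<forall>v\<in>U. \<forall>r. E i r v \<in> U \<and> F i r v \<in> U)"

lemma EF_stableD:
  assumes "EF_stable U" and "v \<in> U"
  shows "v \<in> Wspace" "vsc c v \<in> U" "E (i mod N) r v \<in> U" "F (i mod N) r v \<in> U"
    and "w \<in> U \<Longrightarrow> v + w \<in> U"
  using assms N_pos by (auto simp: EF_stable_def)

lemma F_E_apply:
  "F i 0 (E i r w) x = (if x mod N = i mod N then of_int (s (x + 1)) * \<zeta> x powi r * w x else 0)"
  by (simp add: Eop_def Fop_def)

lemma E_basisv: "E (j mod N) 0 (basisv j) = basisv (j + 1)"
  by (auto simp: Eop_def basisv_def fun_eq_iff)

lemma F_basisv: "F ((j - 1) mod N) 0 (basisv j) = vsc (of_int (s j)) (basisv (j - 1))"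
  by (auto simp: Fop_def basisv_def vsc_def fun_eq_iff)

text \<open>\<open>F\<^sub>iE\<^sub>i\<close> acts diagonally, and on the residue class of \<open>j\<close> its eigenvalues
  \<open>s\<^sub>x\<^sub>+\<^sub>1\<zeta>\<^sub>x\<^sup>r\<close> separate \<open>x = j\<close> from any other \<open>x\<close> (for \<open>r = 1\<close> within the class, \<open>r = 0\<close>
  otherwise); subtracting a multiple of \<open>v\<close> thus kills a coordinate of \<open>v\<close> but not \<open>v\<^sub>j\<close>.\<close>

lemma EF_stable_shrink_support:
  assumes U: "EF_stable U" and v: "v \<in> U" and j: "v j \<noteq> 0" and k: "v k \<noteq> 0" "k \<noteq> j"
  obtains v' where "v' \<in> U" "v' j \<noteq> 0" "{x. v' x \<noteq> 0} \<subset> {x. v x \<noteq> 0}"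
proof -
  define r :: int where "r = (if k mod N = j mod N then 1 else 0)"
  define \<delta> where "\<delta> x = (if x mod N = j mod N then of_int (s (x + 1)) * \<zeta> x powi r else 0)" for x
  define v' where "v' = F (j mod N) 0 (E (j mod N) r v) + vsc (- \<delta> k) v"
  have "v' \<in> U"
    unfolding v'_def using EF_stableD[OF U] v by blast
  moreover have v': "v' x = (\<delta> x - \<delta> k) * v x" for x
    by (simp add: v'_def F_E_apply \<delta>_def vsc_def algebra_simps)
  moreover have "\<delta> j \<noteq> \<delta> k"
  proof (cases "k mod N = j mod N")
    case True
    then have "s (k + 1) = s (j + 1)" by (metis s_cong mod_add_left_eq)
    moreover have "\<zeta> k \<noteq> \<zeta> j" using zeta_inj_on_class True k(2) by blast
    ultimately show ?thesis using True s_cases[of "j + 1"] by (auto simp: \<delta>_def r_def)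
  next
    case False
    then show ?thesis using s_cases[of "j + 1"] by (auto simp: \<delta>_def r_def)
  qed
  ultimately show ?thesis
    using j k by (intro that[of v']) (auto simp: v')
qed

lemma EF_stable_basisv:
  assumes U: "EF_stable U" and "v \<in> U" "v \<noteq> 0"
  obtains j where "basisv j \<in> U"
proof -
  have "\<exists>j. basisv j \<in> U" if "v \<in> U" "v \<noteq> 0" "card {x. v x \<noteq> 0} = c" for c v
    using that
  proof (induction c arbitrary: v rule: less_induct)
    case (less c)
    obtain j where j: "v j \<noteq> 0" using less.prems(2) by (auto simp: fun_eq_iff)
    show ?case
    proof (cases "\<exists>k. v k \<noteq> 0 \<and> k \<noteq> j")
      case True
      then obtain k where "v k \<noteq> 0" "k \<noteq> j" by blast
      with U less.prems(1) j obtain v' where v': "v' \<in> U" "v' j \<noteq> 0" "{x. v' x \<noteq> 0} \<subset> {x. v x \<noteq> 0}"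
        by (rule EF_stable_shrink_support)
      have "finite {x. v x \<noteq> 0}" using EF_stableD(1)[OF U less.prems(1)] by (simp add: Wspace_def)
      then have "card {x. v' x \<noteq> 0} < c" using psubset_card_mono v'(3) less.prems(3) by blast
      moreover have "v' \<noteq> 0" using v'(2) by auto
      ultimately show ?thesis using less.IH v'(1) by blast
    next
      case False
      then have "basisv j = vsc (1 / v j) v"
        using j by (auto simp: vsc_def basisv_def fun_eq_iff)
      then show ?thesis using EF_stableD(2)[OF U less.prems(1)] by metis
    qed
  qed
  with assms that show ?thesis by blast
qed

lemma EF_stable_all_basisv:
  assumes U: "EF_stable U" and j: "basisv j \<in> U"
  shows "basisv k \<in> U"
proof -
  have "basisv (j + t) \<in> U" for t
  proof (induction t rule: int_induct[where k = 0])
    case (step1 t)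
    from EF_stableD(3)[OF U step1(2), of "j + t" 0] show ?case by (simp add: E_basisv add.assoc)
  next
    case (step2 t)
    from EF_stableD(4)[OF U step2(2), of "j + t - 1" 0] have "vsc (of_int (s (j + t))) (basisv (j + t - 1)) \<in> U"
      by (simp add: F_basisv)
    then have "vsc (of_int (s (j + t))) (vsc (of_int (s (j + t))) (basisv (j + t - 1))) \<in> U"
      using EF_stableD(2)[OF U] by blast
    moreover have "of_int (s (j + t)) * of_int (s (j + t)) = (1::complex)"
      using s_square[of "j + t"] by (metis of_int_1 of_int_mult)
    moreover have "vsc 1 w = w" for w by (simp add: vsc_def)
    ultimately have "basisv (j + t - 1) \<in> U" by (simp only: vsc_vsc)
    then show ?case by (simp add: add_diff_eq)
  qed (simp add: j)
  from this[of "k - j"] show ?thesis by simp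
qed

lemma EF_stable_nonzero_eq_Wspace:
  assumes U: "EF_stable U" and "v \<in> U" "v \<noteq> 0"
  shows "U = Wspace"
proof
  show "U \<subseteq> Wspace" using U by (simp add: EF_stable_def)
  obtain j where "basisv j \<in> U" using EF_stable_basisv[OF assms] .
  then have basis: "basisv k \<in> U" for k by (rule EF_stable_all_basisv[OF U])
  show "Wspace \<subseteq> U"
  proof
    fix w assume w: "w \<in> Wspace"
    have "(\<Sum>k\<in>{x. w x \<noteq> 0}. vsc (w k) (basisv k)) \<in> U"
      using U w basis by (intro sum_closed) (auto simp: EF_stable_def Wspace_def)
    then show "w \<in> U" using Wspace_basis_expansion[OF w] by simp
  qed
qed

lemma irreducible: "irreducible_module N E F K_op Kinv_op H_op"
  unfolding irreducible_module_def
proof (intro conjI allI impI)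
  show "Wspace \<noteq> {0}" using basisv_in_Wspace[of 0] basisv_nonzero[of 0] by blast
  fix U
  assume "U \<subseteq> Wspace \<and> 0 \<in> U \<and> (\<forall>v\<in>U. \<forall>w\<in>U. v + w \<in> U) \<and> (\<forall>c. \<forall>v\<in>U. vsc c v \<in> U)
        \<and> (\<forall>i\<in>{0..<N}. \<forall>v\<in>U. K_op i v \<in> U \<and> Kinv_op i v \<in> U
              \<and> (\<forall>r. E i r v \<in> U \<and> F i r v \<in> U) \<and> (\<forall>r. r \<noteq> 0 \<longrightarrow> H_op i r v \<in> U))"
  then have "EF_stable U" and "0 \<in> U" by (auto simp: EF_stable_def)
  then show "U = {0} \<or> U = Wspace"
    using EF_stable_nonzero_eq_Wspace by blast
qed

end

theorem lemma3p2:
  fixes m n :: nat and s :: "int \<Rightarrow> int" and d q u :: complex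
  assumes "parity_seq m n s"
    and "d \<noteq> 0" and "q \<noteq> 0"
    and "\<forall>a b c :: int. (d / q) powi a * (q ^ 2) powi b * (inverse (d * q)) powi c = 1
            \<longrightarrow> a = b \<and> b = c"
    and "u \<noteq> 0"
  shows "\<exists>K Kinv H.
     (\<forall>i\<in>{0..<int (m + n)}. \<forall>r. \<forall>v\<in>Wspace.
        Kplus q K H i r v = KpW s (int (m + n)) d q u i r v
      \<and> Kminus q Kinv H i r v = KmW s (int (m + n)) d q u i r v)
   \<and> Es_module m n s d q (Eop s (int (m + n)) d q u) (Fop s (int (m + n)) d q u) K Kinv H
   \<and> irreducible_module (int (m + n)) (Eop s (int (m + n)) d q u) (Fop s (int (m + n)) d q u) K Kinv H
   \<and> tame_module (int (m + n)) (Kplus q K H) (Kminus q Kinv H)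
   \<and> level_zero (int (m + n)) K"
proof -
  interpret vector_representation m n s d q u "int (m + n)"
    using assms by unfold_locales auto
  show ?thesis
  proof (rule exI[of _ K_op], rule exI[of _ Kinv_op], rule exI[of _ H_op], intro conjI)
    show "\<forall>i\<in>{0..<int (m + n)}. \<forall>r. \<forall>v\<in>Wspace.
        Kplus q K_op H_op i r v = KpW s (int (m + n)) d q u i r v
      \<and> Kminus q Kinv_op H_op i r v = KmW s (int (m + n)) d q u i r v"
      by (simp only: Kplus_eq Kminus_eq) simp
  qed (rule Es_module irreducible tame level_zero)+
qed

end
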